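(* Let $P\subset\mathbb R^n$ be an $n$-dimensional strongly monotypic polytope and let $X=N(P)$ be its set of facet normals. Then $X$ contains some $k\ge 1$ pairwise disjoint subsets $X_1,\dots,X_k$ such that: (i) each $X_i$ is the vertex set of a simplex whose relative interior contains $0$; (ii) the linear spaces $\operatorname{span} X_1,\dots,\operatorname{span} X_k$ are linearly independent (i.e., their sum is direct); and (iii) $\operatorname{span} X_1\oplus\cdots\oplus\operatorname{span} X_k=\mathbb R^n$.
   Context: For a polytope $P$, $N(P)$ denotes the set of outer unit normal vectors of the facets of $P$. A polytope $P$ is called strongly monotypic if for every polytope $Q$ with $N(Q)=N(P)$, the arrangement of the hyperplanes containing the facets of $P$ and the arrangement of the hyperplanes containing the facets of $Q$ are combinatorially equivalent. *)

theory Defs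
  imports "HOL-Analysis.Analysis"
begin

definition supp_val :: "'a::euclidean_space set \<Rightarrow> 'a \<Rightarrow> real" where
  "supp_val P u = (SUP y\<in>P. u \<bullet> y)"

definition facet_normals :: "'a::euclidean_space set \<Rightarrow> 'a set" where
  "facet_normals P = {u. norm u = 1 \<and>
      (\<exists>F. F facet_of P \<and> F = P \<inter> {x. u \<bullet> x = supp_val P u})}"

text \<open>Cells (faces) of the arrangement of the facet hyperplanes of P, indexed by
  sign vectors on the normals: the hyperplane belonging to u is {x. u.x = supp_val P u}.\<close>
definition arr_cell :: "'a::euclidean_space set \<Rightarrow> ('a \<Rightarrow> real) \<Rightarrow> 'a set" where
  "arr_cell P \<sigma> = {x. \<forall>u\<in>facet_normals P. sgn (u \<bullet> x - supp_val P u) = \<sigma> u}"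

text \<open>Combinatorial equivalence of the two arrangements, hyperplanes corresponding
  via their common normal vectors: the same sign vectors are realized.\<close>
definition arr_comb_equiv :: "'a::euclidean_space set \<Rightarrow> 'a set \<Rightarrow> bool" where
  "arr_comb_equiv P Q \<longleftrightarrow> (\<forall>\<sigma>. arr_cell P \<sigma> = {} \<longleftrightarrow> arr_cell Q \<sigma> = {})"

definition strongly_monotypic :: "'a::euclidean_space set \<Rightarrow> bool" where
  "strongly_monotypic P \<longleftrightarrow> polytope P \<and>
     (\<forall>Q. polytope Q \<and> facet_normals Q = facet_normals P \<longrightarrow> arr_comb_equiv P Q)"

end

theory Submission
  imports Defs
begin

text \<open>
  Let X be the set of facet normals. For a circuit c of X (a minimal linear dependence), the
  facet hyperplanes with c u \<noteq> 0 have a common point iff \<open>\<Sum>u. c u * h u = 0\<close>, where h is the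
  support function. Strong monotypy makes this condition the same for all polytopes with facet
  normals X, among them the tilted polytopes \<open>{x. \<forall>u\<in>X. u \<bullet> x \<le> 1 + \<tau> * \<bar>u \<bullet> w\<bar>}\<close>; if c had two
  positive and two negative coefficients, a suitable w and \<open>\<tau> \<ge> 0\<close> would violate this. So every
  circuit has at most one positive or at most one negative coefficient. As P is bounded, X
  positively spans the space. Such a configuration splits into disjoint positive circuits whose
  spans form a direct sum: take a positive circuit C inside an irredundant totally cyclic subset,
  contract by span C, decompose the remainder by induction, and lift its positive circuits back,
  the sign condition together with irredundancy ruling out any other lift. Finally, a positive
  circuit is the vertex set of a simplex with 0 in its relative interior.
\<close>

section \<open>Vector configurations modulo a subspace\<close>

text \<open>Working modulo a subspace L lets the contraction by a positive circuit C be expressed by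
  passing to \<open>span (L \<union> C)\<close>.\<close>

definition positive_circuit :: "'v::real_vector set \<Rightarrow> 'v set \<Rightarrow> bool" where
  "positive_circuit L Z \<longleftrightarrow> finite Z \<and> Z \<noteq> {} \<and>
     (\<exists>\<mu>. (\<forall>z\<in>Z. \<mu> z > 0) \<and> (\<Sum>z\<in>Z. \<mu> z *\<^sub>R z) \<in> L \<and>
        (\<forall>e. (\<Sum>z\<in>Z. e z *\<^sub>R z) \<in> L \<longrightarrow> (\<exists>s. \<forall>z\<in>Z. e z = s * \<mu> z)))"

definition totally_cyclic :: "'v::real_vector set \<Rightarrow> 'v set \<Rightarrow> bool" where
  "totally_cyclic L I \<longleftrightarrow> (\<forall>i\<in>I. \<exists>c. (\<forall>j\<in>I. c j \<ge> 0) \<and> c i > 0 \<and> (\<Sum>j\<in>I. c j *\<^sub>R j) \<in> L)"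

definition circuit :: "'v::real_vector set \<Rightarrow> 'v set \<Rightarrow> ('v \<Rightarrow> real) \<Rightarrow> bool" where
  "circuit L I c \<longleftrightarrow> (\<Sum>j\<in>I. c j *\<^sub>R j) \<in> L \<and> (\<exists>j\<in>I. c j \<noteq> 0) \<and>
     (\<forall>e. (\<forall>j\<in>I. c j = 0 \<longrightarrow> e j = 0) \<and> (\<Sum>j\<in>I. e j *\<^sub>R j) \<in> L \<longrightarrow> (\<exists>s. \<forall>j\<in>I. e j = s * c j))"

definition circuits_almost_positive :: "'v::real_vector set \<Rightarrow> 'v set \<Rightarrow> bool" where
  "circuits_almost_positive L I \<longleftrightarrow>
     (\<forall>c. circuit L I c \<longrightarrow> card {j\<in>I. c j > 0} \<le> 1 \<or> card {j\<in>I. c j < 0} \<le> 1)"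

definition circuit_decomposition :: "'v::real_vector set \<Rightarrow> 'v set \<Rightarrow> nat \<Rightarrow> (nat \<Rightarrow> 'v set) \<Rightarrow> bool" where
  "circuit_decomposition L I k Z \<longleftrightarrow>
     (\<forall>i<k. Z i \<subseteq> I \<and> positive_circuit L (Z i)) \<and> disjoint_family_on Z {..<k} \<and>
     (\<forall>v. (\<forall>i<k. v i \<in> span (Z i)) \<and> (\<Sum>i<k. v i) \<in> L \<longrightarrow> (\<forall>i<k. v i \<in> L)) \<and>
     span I \<subseteq> span (L \<union> (\<Union>i<k. Z i))"

definition positively_irredundant :: "'v::real_vector set \<Rightarrow> 'v set \<Rightarrow> bool" where
  "positively_irredundant L J \<longleftrightarrow>
     (\<forall>c\<in>J. \<forall>a. (\<forall>j\<in>J-{c}. a j \<ge> 0) \<longrightarrow> c - (\<Sum>j\<in>J-{c}. a j *\<^sub>R j) \<notin> L)"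

lemma positive_dependence_minimal_unique:
  assumes fin: "finite S" and sub: "subspace L"
    and pos: "\<forall>z\<in>S. \<kappa> z > 0" and dep: "(\<Sum>z\<in>S. \<kappa> z *\<^sub>R z) \<in> L"
    and min: "\<And>S' \<kappa>'. S' \<subset> S \<Longrightarrow> S' \<noteq> {} \<Longrightarrow> \<forall>z\<in>S'. (\<kappa>' z :: real) > 0 \<Longrightarrow> (\<Sum>z\<in>S'. \<kappa>' z *\<^sub>R z) \<notin> L"
    and e: "(\<Sum>z\<in>S. e z *\<^sub>R z) \<in> L" and e_pos: "\<exists>z\<in>S. e z > 0"
  shows "\<exists>s. \<forall>z\<in>S. e z = s * \<kappa> z"
proof -
  define P where "P = {z\<in>S. e z > 0}"
  have "finite P" "P \<noteq> {}" using fin e_pos by (auto simp: P_def)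
  define t where "t = Min ((\<lambda>z. \<kappa> z / e z) ` P)"
  have "t \<in> (\<lambda>z. \<kappa> z / e z) ` P"
    unfolding t_def using \<open>finite P\<close> \<open>P \<noteq> {}\<close> by (intro Min_in) auto
  then obtain z0 where z0: "z0 \<in> P" "t = \<kappa> z0 / e z0" by auto
  have t_pos: "t > 0" using z0 pos by (auto simp: P_def)
  define d where "d z = \<kappa> z - t * e z" for z
  have d_nonneg: "d z \<ge> 0" if "z \<in> S" for z
  proof (cases "e z > 0")
    case True
    then have "t \<le> \<kappa> z / e z" unfolding t_def using \<open>finite P\<close> that by (auto simp: P_def)
    then show ?thesis using True by (simp add: d_def pos_le_divide_eq)
  next
    case False
    then have "t * e z \<le> 0" using t_pos by (simp add: mult_nonneg_nonpos)
    then show ?thesis using pos that by (auto simp: d_def)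
  qed
  define S' where "S' = {z\<in>S. d z > 0}"
  have "z0 \<in> S - S'" using z0 by (auto simp: d_def S'_def P_def)
  then have "S' \<subset> S" unfolding S'_def by blast
  have "(\<Sum>z\<in>S'. d z *\<^sub>R z) = (\<Sum>z\<in>S. d z *\<^sub>R z)"
    by (rule sum.mono_neutral_left) (use fin d_nonneg in \<open>force simp: S'_def less_le\<close>)+
  also have "\<dots> = (\<Sum>z\<in>S. \<kappa> z *\<^sub>R z) - t *\<^sub>R (\<Sum>z\<in>S. e z *\<^sub>R z)"
    by (simp add: d_def scaleR_diff_left sum_subtractf scaleR_sum_right)
  also have "\<dots> \<in> L" using dep e sub by (simp add: subspace_diff subspace_scale)
  finally have "S' = {}" using min[OF \<open>S' \<subset> S\<close>] by (auto simp: S'_def)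
  then have "\<forall>z\<in>S. e z = (1/t) * \<kappa> z"
    using d_nonneg t_pos by (force simp: S'_def d_def field_simps)
  then show ?thesis by blast
qed

lemma positive_circuitI_minimal:
  assumes fin: "finite S" and sub: "subspace L" and "S \<noteq> {}"
    and pos: "\<forall>z\<in>S. \<kappa> z > 0" and dep: "(\<Sum>z\<in>S. \<kappa> z *\<^sub>R z) \<in> L"
    and min: "\<And>S' \<kappa>'. S' \<subset> S \<Longrightarrow> S' \<noteq> {} \<Longrightarrow> \<forall>z\<in>S'. (\<kappa>' z :: real) > 0 \<Longrightarrow> (\<Sum>z\<in>S'. \<kappa>' z *\<^sub>R z) \<notin> L"
  shows "positive_circuit L S"
proof -
  have unique: "\<exists>s. \<forall>z\<in>S. e z = s * \<kappa> z"
    if "(\<Sum>z\<in>S. e z *\<^sub>R z) \<in> L" "\<exists>z\<in>S. e z > 0" for e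
    by (rule positive_dependence_minimal_unique[OF fin sub pos dep]) (use min that in auto)
  have "\<exists>s. \<forall>z\<in>S. e z = s * \<kappa> z" if e: "(\<Sum>z\<in>S. e z *\<^sub>R z) \<in> L" for e
  proof -
    consider "\<exists>z\<in>S. e z > 0" | "\<exists>z\<in>S. - e z > 0" | "\<forall>z\<in>S. e z = 0"
      by (metis linorder_neqE_linordered_idom neg_0_less_iff_less)
    then show ?thesis
    proof cases
      case 1
      then show ?thesis using unique[OF e] by blast
    next
      case 2
      have "(\<Sum>z\<in>S. (- e z) *\<^sub>R z) \<in> L" using e sub by (simp add: sum_negf subspace_neg)
      then obtain s where "\<forall>z\<in>S. - e z = s * \<kappa> z" using unique[of "\<lambda>z. - e z"] 2 by blast
      then have "\<forall>z\<in>S. e z = (- s) * \<kappa> z" by (metis minus_minus mult_minus_left)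
      then show ?thesis by blast
    next
      case 3
      then show ?thesis by (metis mult_zero_left)
    qed
  qed
  then show ?thesis unfolding positive_circuit_def using assms by blast
qed

lemma totally_cyclic_has_positive_circuit:
  assumes fin: "finite J" and sub: "subspace L" and "J \<noteq> {}" and tc: "totally_cyclic L J"
  obtains C where "C \<subseteq> J" "positive_circuit L C"
proof -
  define Q where "Q S \<longleftrightarrow> S \<subseteq> J \<and> S \<noteq> {} \<and> (\<exists>\<kappa>. (\<forall>z\<in>S. \<kappa> z > 0) \<and> (\<Sum>z\<in>S. \<kappa> z *\<^sub>R z) \<in> L)" for S
  obtain i where "i \<in> J" using \<open>J \<noteq> {}\<close> by auto
  then obtain c where c: "\<forall>j\<in>J. c j \<ge> 0" "c i > 0" "(\<Sum>j\<in>J. c j *\<^sub>R j) \<in> L"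
    using tc unfolding totally_cyclic_def by blast
  define S0 where "S0 = {j\<in>J. c j > 0}"
  have "(\<Sum>j\<in>S0. c j *\<^sub>R j) = (\<Sum>j\<in>J. c j *\<^sub>R j)"
    by (rule sum.mono_neutral_left) (use fin c(1) in \<open>force simp: S0_def less_le\<close>)+
  then have "Q S0" using c \<open>i \<in> J\<close> unfolding Q_def S0_def by auto
  then obtain S where QS: "Q S" and least: "\<And>S'. Q S' \<Longrightarrow> card S \<le> card S'"
    using ex_has_least_nat[of Q S0 card] by blast
  then obtain \<kappa> where S: "S \<subseteq> J" "S \<noteq> {}" "\<forall>z\<in>S. \<kappa> z > 0" "(\<Sum>z\<in>S. \<kappa> z *\<^sub>R z) \<in> L"
    unfolding Q_def by blast
  have "finite S" using S(1) fin finite_subset by blast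
  have "positive_circuit L S"
  proof (rule positive_circuitI_minimal[OF \<open>finite S\<close> sub S(2-4)])
    fix S' and \<kappa>' :: "'a \<Rightarrow> real"
    assume S': "S' \<subset> S" "S' \<noteq> {}" "\<forall>z\<in>S'. \<kappa>' z > 0"
    show "(\<Sum>z\<in>S'. \<kappa>' z *\<^sub>R z) \<notin> L"
    proof
      assume "(\<Sum>z\<in>S'. \<kappa>' z *\<^sub>R z) \<in> L"
      then have "card S \<le> card S'" using S' S(1) by (intro least) (auto simp: Q_def)
      moreover have "card S' < card S" using S'(1) \<open>finite S\<close> psubset_card_mono by blast
      ultimately show False by simp
    qed
  qed
  then show thesis using that S(1) by blast
qed

lemma totally_cyclic_irredundant_subset:
  assumes fin: "finite I" and sub: "subspace L" and tc: "totally_cyclic L I"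
  obtains J where "J \<subseteq> I" "totally_cyclic L J" "span I \<subseteq> span (L \<union> J)"
    "positively_irredundant L J"
proof -
  define Q where "Q J \<longleftrightarrow> J \<subseteq> I \<and> totally_cyclic L J \<and> span I \<subseteq> span (L \<union> J)" for J
  have "Q I" unfolding Q_def using tc by (simp add: span_mono)
  then obtain J where "Q J" and least: "\<And>J'. Q J' \<Longrightarrow> card J \<le> card J'"
    using ex_has_least_nat[of Q I card] by blast
  then have JI: "J \<subseteq> I" and tcJ: "totally_cyclic L J" and spJ: "span I \<subseteq> span (L \<union> J)"
    unfolding Q_def by auto
  have finJ: "finite J" using JI fin finite_subset by blast
  have "c - (\<Sum>j\<in>J-{c}. a j *\<^sub>R j) \<notin> L" if c: "c \<in> J" and a: "\<forall>j\<in>J-{c}. a j \<ge> 0" for c a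
  proof
    assume aL: "c - (\<Sum>j\<in>J-{c}. a j *\<^sub>R j) \<in> L"
    have "totally_cyclic L (J - {c})"
      unfolding totally_cyclic_def
    proof
      fix i assume i: "i \<in> J - {c}"
      obtain c0 where c0: "\<forall>j\<in>J. c0 j \<ge> 0" "c0 i > 0" "(\<Sum>j\<in>J. c0 j *\<^sub>R j) \<in> L"
        using tcJ i unfolding totally_cyclic_def by blast
      define c' where "c' j = c0 j + c0 c * a j" for j
      have "(\<Sum>j\<in>J-{c}. c' j *\<^sub>R j) = (\<Sum>j\<in>J. c0 j *\<^sub>R j) - c0 c *\<^sub>R (c - (\<Sum>j\<in>J-{c}. a j *\<^sub>R j))"
        by (simp add: c'_def sum.remove[OF finJ c] scaleR_add_left sum.distrib scaleR_sum_right
            scaleR_diff_right algebra_simps)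
      then have "(\<Sum>j\<in>J-{c}. c' j *\<^sub>R j) \<in> L"
        using c0(3) aL sub by (simp add: subspace_diff subspace_scale)
      moreover have "\<forall>j\<in>J-{c}. c' j \<ge> 0" "c' i > 0"
        using c0 a i c by (auto simp: c'_def intro!: add_pos_nonneg)
      ultimately show "\<exists>c'. (\<forall>j\<in>J-{c}. 0 \<le> c' j) \<and> 0 < c' i \<and> (\<Sum>j\<in>J-{c}. c' j *\<^sub>R j) \<in> L"
        by blast
    qed
    moreover have "span I \<subseteq> span (L \<union> (J - {c}))"
    proof -
      have "c = (c - (\<Sum>j\<in>J-{c}. a j *\<^sub>R j)) + (\<Sum>j\<in>J-{c}. a j *\<^sub>R j)" by simp
      also have "\<dots> \<in> span (L \<union> (J - {c}))"
        using aL by (intro span_add span_sum span_scale) (auto intro: span_base)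
      finally have "span (L \<union> J) = span (L \<union> (J - {c}))"
        using span_redundant[of c "L \<union> (J - {c})"] c by (metis Un_insert_right insert_Diff)
      then show ?thesis using spJ by simp
    qed
    ultimately have "card J \<le> card (J - {c})" using JI by (intro least) (auto simp: Q_def)
    then show False using finJ c by (meson card_Diff1_less not_le)
  qed
  then show thesis using that JI tcJ spJ unfolding positively_irredundant_def by blast
qed

lemma totally_cyclic_contract:
  assumes fin: "finite J" and sub': "subspace L'" and "L \<subseteq> L'" and tc: "totally_cyclic L J"
  shows "totally_cyclic L' (J - L')"
  unfolding totally_cyclic_def
proof
  fix i assume i: "i \<in> J - L'"
  then obtain c where c: "\<forall>j\<in>J. c j \<ge> 0" "c i > 0" "(\<Sum>j\<in>J. c j *\<^sub>R j) \<in> L"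
    using tc unfolding totally_cyclic_def by blast
  have "(\<Sum>j\<in>J. c j *\<^sub>R j) = (\<Sum>j\<in>J \<inter> L'. c j *\<^sub>R j) + (\<Sum>j\<in>J - L'. c j *\<^sub>R j)"
    using fin by (rule sum.Int_Diff)
  moreover have "(\<Sum>j\<in>J \<inter> L'. c j *\<^sub>R j) \<in> L'" using sub' by (intro subspace_sum subspace_scale) auto
  ultimately have "(\<Sum>j\<in>J - L'. c j *\<^sub>R j) \<in> L'"
    using c(3) \<open>L \<subseteq> L'\<close> sub' by (metis add_diff_cancel_left' subsetD subspace_diff)
  then show "\<exists>c. (\<forall>j\<in>J - L'. 0 \<le> c j) \<and> 0 < c i \<and> (\<Sum>j\<in>J - L'. c j *\<^sub>R j) \<in> L'"
    using c i by blast
qed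

lemma span_Un_subspace_finite:
  assumes "subspace L" "finite C"
  shows "x \<in> span (L \<union> C) \<longleftrightarrow> (\<exists>l\<in>L. \<exists>e. x = l + (\<Sum>z\<in>C. e z *\<^sub>R z))"
proof -
  have "span L = L" using assms(1) by simp
  then show ?thesis unfolding span_Un span_finite[OF assms(2)] by blast
qed

lemma positive_circuit_span_Un_nonneg:
  assumes sub: "subspace L" and C: "positive_circuit L C" and y: "y \<in> span (L \<union> C)"
  obtains e x0 where "x0 \<in> C" "e x0 = 0" "\<forall>z\<in>C. e z \<ge> 0" "y - (\<Sum>z\<in>C. e z *\<^sub>R z) \<in> L"
proof -
  obtain \<kappa> where fin: "finite C" and "C \<noteq> {}" and pos: "\<forall>z\<in>C. \<kappa> z > 0"
    and dep: "(\<Sum>z\<in>C. \<kappa> z *\<^sub>R z) \<in> L"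
    using C unfolding positive_circuit_def by blast
  obtain l e where "l \<in> L" and y_eq: "y = l + (\<Sum>z\<in>C. e z *\<^sub>R z)"
    using y span_Un_subspace_finite[OF sub fin] by blast
  define t where "t = Min ((\<lambda>z. e z / \<kappa> z) ` C)"
  have "t \<in> (\<lambda>z. e z / \<kappa> z) ` C" unfolding t_def using fin \<open>C \<noteq> {}\<close> by (intro Min_in) auto
  then obtain x0 where x0: "x0 \<in> C" "t = e x0 / \<kappa> x0" by auto
  define e' where "e' z = e z - t * \<kappa> z" for z
  have "e' x0 = 0" using x0 pos by (auto simp: e'_def)
  moreover have "\<forall>z\<in>C. e' z \<ge> 0"
  proof
    fix z assume "z \<in> C"
    then have "t \<le> e z / \<kappa> z" unfolding t_def using fin by auto
    then show "e' z \<ge> 0" using pos \<open>z \<in> C\<close> by (simp add: e'_def pos_le_divide_eq)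
  qed
  moreover have "y - (\<Sum>z\<in>C. e' z *\<^sub>R z) = l + t *\<^sub>R (\<Sum>z\<in>C. \<kappa> z *\<^sub>R z)"
    by (simp add: y_eq e'_def scaleR_diff_left sum_subtractf scaleR_sum_right)
  then have "y - (\<Sum>z\<in>C. e' z *\<^sub>R z) \<in> L"
    using \<open>l \<in> L\<close> dep sub by (simp add: subspace_add subspace_scale)
  ultimately show thesis using that x0 by blast
qed

lemma sum_Un_disjoint_vanishing:
  assumes "finite I" "C \<subseteq> I" "I' \<subseteq> I" "C \<inter> I' = {}" "\<forall>j\<in>I - (C \<union> I'). g j = 0"
  shows "sum g I = sum g C + sum g I'"
proof -
  have "sum g I = sum g (C \<union> I')" by (rule sum.mono_neutral_right) (use assms in auto)
  also have "\<dots> = sum g C + sum g I'"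
    by (rule sum.union_disjoint) (use assms in \<open>auto intro: finite_subset\<close>)
  finally show ?thesis .
qed

lemma circuit_lift:
  assumes fin: "finite I" and sub: "subspace L" and C: "positive_circuit L C" "C \<subseteq> I"
    and I': "I' \<subseteq> I - C" and c: "circuit (span (L \<union> C)) I' c"
  obtains ct where "circuit L I ct" "\<forall>j\<in>I'. ct j = c j" "\<forall>j\<in>C. ct j \<le> 0"
    "\<forall>j\<in>I - (C \<union> I'). ct j = 0"
    "(\<Sum>j\<in>I. ct j *\<^sub>R j) = (\<Sum>j\<in>C. ct j *\<^sub>R j) + (\<Sum>j\<in>I'. c j *\<^sub>R j)"
proof -
  obtain \<kappa> where finC: "finite C" and pos: "\<forall>z\<in>C. \<kappa> z > 0"
    and circC: "\<forall>e. (\<Sum>z\<in>C. e z *\<^sub>R z) \<in> L \<longrightarrow> (\<exists>s. \<forall>z\<in>C. e z = s * \<kappa> z)"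
    using C(1) unfolding positive_circuit_def by blast
  have "(\<Sum>j\<in>I'. c j *\<^sub>R j) \<in> span (L \<union> C)" using c unfolding circuit_def by blast
  then obtain e0 x0 where x0: "x0 \<in> C" "e0 x0 = 0" and e0_nonneg: "\<forall>z\<in>C. e0 z \<ge> 0"
    and dep: "(\<Sum>j\<in>I'. c j *\<^sub>R j) - (\<Sum>z\<in>C. e0 z *\<^sub>R z) \<in> L"
    using positive_circuit_span_Un_nonneg[OF sub C(1)] by blast
  define ct where "ct j = (if j \<in> C then - e0 j else if j \<in> I' then c j else 0)" for j
  have split: "(\<Sum>j\<in>I. g j *\<^sub>R j) = (\<Sum>j\<in>C. g j *\<^sub>R j) + (\<Sum>j\<in>I'. g j *\<^sub>R j)"
    if "\<forall>j\<in>I - (C \<union> I'). g j = 0" for g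
    using sum_Un_disjoint_vanishing[of I C I' "\<lambda>j. g j *\<^sub>R j"] fin C(2) I' that by auto
  have ct_I': "ct j = c j" if "j \<in> I'" for j using that I' by (auto simp: ct_def)
  have ct_split: "(\<Sum>j\<in>I. ct j *\<^sub>R j) = (\<Sum>j\<in>C. ct j *\<^sub>R j) + (\<Sum>j\<in>I'. c j *\<^sub>R j)"
    using split[of ct] ct_I' by (simp add: ct_def)
  also have "\<dots> = (\<Sum>j\<in>I'. c j *\<^sub>R j) - (\<Sum>z\<in>C. e0 z *\<^sub>R z)"
    by (simp add: ct_def sum_negf)
  finally have ct_dep: "(\<Sum>j\<in>I. ct j *\<^sub>R j) \<in> L" using dep by simp
  obtain j where "j \<in> I'" "c j \<noteq> 0" using c unfolding circuit_def by blast
  then have "\<exists>j\<in>I. ct j \<noteq> 0" using ct_I'[of j] I' by (intro bexI[of _ j]) auto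
  moreover have "\<exists>s. \<forall>j\<in>I. e j = s * ct j"
    if supp: "\<forall>j\<in>I. ct j = 0 \<longrightarrow> e j = 0" and eL: "(\<Sum>j\<in>I. e j *\<^sub>R j) \<in> L" for e
  proof -
    have e_out: "\<forall>j\<in>I - (C \<union> I'). e j = 0" using supp by (auto simp: ct_def)
    have "(\<Sum>j\<in>I'. e j *\<^sub>R j) = (\<Sum>j\<in>I. e j *\<^sub>R j) - (\<Sum>j\<in>C. e j *\<^sub>R j)"
      using split[OF e_out] by simp
    also have "\<dots> \<in> span (L \<union> C)"
    proof (rule span_diff)
      show "(\<Sum>j\<in>I. e j *\<^sub>R j) \<in> span (L \<union> C)" using eL by (simp add: span_base)
      show "(\<Sum>j\<in>C. e j *\<^sub>R j) \<in> span (L \<union> C)" by (intro span_sum span_scale) (simp add: span_base)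
    qed
    finally have "(\<Sum>j\<in>I'. e j *\<^sub>R j) \<in> span (L \<union> C)" .
    moreover have "\<forall>j\<in>I'. c j = 0 \<longrightarrow> e j = 0" using supp ct_I' I' by auto
    ultimately obtain s where s: "\<forall>j\<in>I'. e j = s * c j"
      using c unfolding circuit_def by blast
    define d where "d j = e j - s * ct j" for j
    have d_out: "\<forall>j\<in>I - (C \<union> I'). d j = 0" and d_I': "\<forall>j\<in>I'. d j = 0"
      using e_out s ct_I' by (auto simp: d_def ct_def)
    have "(\<Sum>j\<in>C. d j *\<^sub>R j) = (\<Sum>j\<in>I. e j *\<^sub>R j) - s *\<^sub>R (\<Sum>j\<in>I. ct j *\<^sub>R j)"
      using split[OF d_out] d_I'
      by (simp add: d_def scaleR_diff_left sum_subtractf scaleR_sum_right)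
    also have "\<dots> \<in> L" using eL ct_dep sub by (simp add: subspace_diff subspace_scale)
    finally obtain r where r: "\<forall>z\<in>C. d z = r * \<kappa> z" using circC by blast
    have "d x0 = 0" using supp x0 C(2) by (auto simp: d_def ct_def)
    then have "\<forall>z\<in>C. d z = 0" using r x0 pos by force
    then have "\<forall>j\<in>I. d j = 0" using d_out d_I' by blast
    then show ?thesis unfolding d_def by auto
  qed
  ultimately have "circuit L I ct" unfolding circuit_def using ct_dep by blast
  moreover have "\<forall>j\<in>C. ct j \<le> 0" "\<forall>j\<in>I - (C \<union> I'). ct j = 0"
    using e0_nonneg by (auto simp: ct_def)
  ultimately show thesis using that ct_I' ct_split by blast
qed

lemma circuits_almost_positive_contract:
  assumes fin: "finite I" and sub: "subspace L" and C: "positive_circuit L C" "C \<subseteq> I"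
    and I': "I' \<subseteq> I - C" and sp: "circuits_almost_positive L I"
  shows "circuits_almost_positive (span (L \<union> C)) I'"
  unfolding circuits_almost_positive_def
proof (intro allI impI)
  fix c assume "circuit (span (L \<union> C)) I' c"
  then obtain ct where ct: "circuit L I ct" "\<forall>j\<in>I'. ct j = c j"
    by (rule circuit_lift[OF fin sub C I'])
  have "{j\<in>I'. c j > 0} \<subseteq> {j\<in>I. ct j > 0}" "{j\<in>I'. c j < 0} \<subseteq> {j\<in>I. ct j < 0}"
    using ct(2) I' by auto
  then have "card {j\<in>I'. c j > 0} \<le> card {j\<in>I. ct j > 0}"
    "card {j\<in>I'. c j < 0} \<le> card {j\<in>I. ct j < 0}"
    using fin by (simp_all add: card_mono)
  moreover have "card {j\<in>I. ct j > 0} \<le> 1 \<or> card {j\<in>I. ct j < 0} \<le> 1"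
    using sp ct(1) unfolding circuits_almost_positive_def by blast
  ultimately show "card {j\<in>I'. c j > 0} \<le> 1 \<or> card {j\<in>I'. c j < 0} \<le> 1" by linarith
qed

lemma positive_circuit_span_Int:
  assumes sub: "subspace L" and "L \<subseteq> L'" and Z: "positive_circuit L Z" "positive_circuit L' Z"
  shows "span Z \<inter> L' \<subseteq> L"
proof
  fix v assume v: "v \<in> span Z \<inter> L'"
  obtain \<mu> where fin: "finite Z" and "Z \<noteq> {}" and \<mu>: "\<forall>z\<in>Z. \<mu> z > 0" "(\<Sum>z\<in>Z. \<mu> z *\<^sub>R z) \<in> L"
    using Z(1) unfolding positive_circuit_def by blast
  obtain \<nu> where \<nu>: "\<forall>e. (\<Sum>z\<in>Z. e z *\<^sub>R z) \<in> L' \<longrightarrow> (\<exists>s. \<forall>z\<in>Z. e z = s * \<nu> z)"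
    using Z(2) unfolding positive_circuit_def by blast
  obtain a where a: "v = (\<Sum>z\<in>Z. a z *\<^sub>R z)" using v span_finite[OF fin] by auto
  obtain s where s: "\<forall>z\<in>Z. a z = s * \<nu> z" using \<nu>[rule_format, of a] a v by blast
  obtain s' where s': "\<forall>z\<in>Z. \<mu> z = s' * \<nu> z"
    using \<nu>[rule_format, of \<mu>] \<mu>(2) \<open>L \<subseteq> L'\<close> by blast
  obtain z0 where "z0 \<in> Z" using \<open>Z \<noteq> {}\<close> by blast
  then have "s' \<noteq> 0" using s' \<mu>(1) by force
  then have "\<forall>z\<in>Z. a z = (s / s') * \<mu> z" using s s' by auto
  then have "v = (s / s') *\<^sub>R (\<Sum>z\<in>Z. \<mu> z *\<^sub>R z)" by (simp add: a scaleR_sum_right)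
  then show "v \<in> L" using \<mu>(2) sub by (simp add: subspace_scale)
qed

lemma positive_circuit_card_ge_2:
  assumes sub: "subspace L" and Z: "positive_circuit L Z" "Z \<inter> L = {}"
  shows "card Z \<ge> 2"
proof (rule ccontr)
  obtain \<mu> where "finite Z" "Z \<noteq> {}" "\<forall>z\<in>Z. \<mu> z > 0" "(\<Sum>z\<in>Z. \<mu> z *\<^sub>R z) \<in> L"
    using Z(1) unfolding positive_circuit_def by blast
  moreover assume "\<not> card Z \<ge> 2"
  ultimately have "card Z = 1" by (metis card_0_eq less_2_cases not_le One_nat_def)
  then obtain z where "Z = {z}" by (rule card_1_singletonE)
  then have "\<mu> z > 0" and zL: "\<mu> z *\<^sub>R z \<in> L"
    using \<open>\<forall>z\<in>Z. \<mu> z > 0\<close> \<open>(\<Sum>z\<in>Z. \<mu> z *\<^sub>R z) \<in> L\<close> by auto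
  have "(1 / \<mu> z) *\<^sub>R (\<mu> z *\<^sub>R z) \<in> L" using zL by (rule subspace_scale[OF sub])
  then have "z \<in> L" using \<open>\<mu> z > 0\<close> by simp
  then show False using \<open>Z = {z}\<close> Z(2) by blast
qed

lemma positively_irredundant_negative_dependence:
  assumes sub: "subspace L" and irred: "positively_irredundant L J" and "finite J"
    and x: "x \<in> J" and Z: "Z \<subseteq> J - {x}" and \<mu>: "\<forall>z\<in>Z. \<mu> z \<ge> 0" and "t < 0"
  shows "(\<Sum>z\<in>Z. \<mu> z *\<^sub>R z) + t *\<^sub>R x \<notin> L"
proof
  assume dep: "(\<Sum>z\<in>Z. \<mu> z *\<^sub>R z) + t *\<^sub>R x \<in> L"
  define a where "a j = (if j \<in> Z then \<mu> j / (- t) else 0)" for j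
  have "(\<Sum>j\<in>J-{x}. a j *\<^sub>R j) = (\<Sum>j\<in>Z. a j *\<^sub>R j)"
    by (rule sum.mono_neutral_right) (use \<open>finite J\<close> Z in \<open>auto simp: a_def\<close>)
  then have "x - (\<Sum>j\<in>J-{x}. a j *\<^sub>R j) = (1 / t) *\<^sub>R ((\<Sum>z\<in>Z. \<mu> z *\<^sub>R z) + t *\<^sub>R x)"
    using \<open>t < 0\<close> by (simp add: a_def scaleR_sum_right scaleR_add_right sum_negf divide_simps)
  also have "\<dots> \<in> L" using dep by (rule subspace_scale[OF sub])
  finally have "x - (\<Sum>j\<in>J-{x}. a j *\<^sub>R j) \<in> L" .
  moreover have "\<forall>j\<in>J-{x}. a j \<ge> 0" using \<mu> \<open>t < 0\<close> by (simp add: a_def divide_nonneg_neg)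
  ultimately show False using irred x unfolding positively_irredundant_def by blast
qed

lemma circuit_extend_zero:
  assumes fin: "finite I" and "Z \<subseteq> I" and "\<exists>z\<in>Z. \<mu> z \<noteq> 0" and dep: "(\<Sum>z\<in>Z. \<mu> z *\<^sub>R z) \<in> L"
    and unique: "\<forall>e. (\<Sum>z\<in>Z. e z *\<^sub>R z) \<in> L \<longrightarrow> (\<exists>s. \<forall>z\<in>Z. e z = s * \<mu> z)"
  shows "circuit L I (\<lambda>j. if j \<in> Z then \<mu> j else 0)"
proof -
  have sum_Z: "(\<Sum>j\<in>I. g j *\<^sub>R j) = (\<Sum>z\<in>Z. g z *\<^sub>R z)" if "\<forall>j\<in>I-Z. g j = 0" for g
    by (rule sum.mono_neutral_right) (use fin \<open>Z \<subseteq> I\<close> that in auto)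
  have "(\<Sum>j\<in>I. (if j \<in> Z then \<mu> j else 0) *\<^sub>R j) = (\<Sum>z\<in>Z. \<mu> z *\<^sub>R z)"
    using sum_Z[of "\<lambda>j. if j \<in> Z then \<mu> j else 0"] by (simp cong: sum.cong)
  moreover have "\<exists>j\<in>I. (if j \<in> Z then \<mu> j else 0) \<noteq> 0" using assms(2,3) by auto
  moreover have "\<exists>s. \<forall>j\<in>I. e j = s * (if j \<in> Z then \<mu> j else 0)"
    if supp: "\<forall>j\<in>I. (if j \<in> Z then \<mu> j else 0) = 0 \<longrightarrow> e j = 0"
      and eL: "(\<Sum>j\<in>I. e j *\<^sub>R j) \<in> L" for e
  proof -
    have "\<forall>j\<in>I-Z. e j = 0" using supp by auto
    then have "(\<Sum>z\<in>Z. e z *\<^sub>R z) \<in> L" using eL sum_Z[of e] by simp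
    then obtain s where "\<forall>z\<in>Z. e z = s * \<mu> z" using unique by blast
    then show ?thesis using \<open>\<forall>j\<in>I-Z. e j = 0\<close> by auto
  qed
  ultimately show ?thesis using dep unfolding circuit_def by auto
qed

lemma positively_irredundant_single_negative:
  assumes sub: "subspace L" and irred: "positively_irredundant L J" and "finite J" "C \<subseteq> J"
    and nonpos: "\<forall>j\<in>C. ct j \<le> 0" and one: "card {j\<in>C. ct j < 0} \<le> 1"
    and Z: "Z \<subseteq> J - C" "\<forall>z\<in>Z. \<mu> z \<ge> 0" and dep: "(\<Sum>j\<in>C. ct j *\<^sub>R j) + (\<Sum>z\<in>Z. \<mu> z *\<^sub>R z) \<in> L"
  shows "(\<Sum>z\<in>Z. \<mu> z *\<^sub>R z) \<in> L"
proof (cases "{j\<in>C. ct j < 0} = {}")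
  case True
  then have "\<forall>j\<in>C. ct j = 0" using nonpos by force
  then show ?thesis using dep by simp
next
  case False
  have "finite C" using \<open>finite J\<close> \<open>C \<subseteq> J\<close> finite_subset by blast
  from False obtain x where "x \<in> {j\<in>C. ct j < 0}" by blast
  then have neg: "{j\<in>C. ct j < 0} = {x}" using one \<open>finite C\<close> by (auto simp: card_le_Suc0_iff_eq)
  then have "x \<in> C" "ct x < 0" by auto
  have "\<forall>j\<in>C - {x}. ct j = 0" using neg nonpos by force
  then have "(\<Sum>j\<in>C. ct j *\<^sub>R j) = ct x *\<^sub>R x"
    using sum.remove[OF \<open>finite C\<close> \<open>x \<in> C\<close>, of "\<lambda>j. ct j *\<^sub>R j"] by simp
  then have "(\<Sum>z\<in>Z. \<mu> z *\<^sub>R z) + ct x *\<^sub>R x \<in> L" using dep by (simp add: add.commute)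
  moreover have "x \<in> J" "Z \<subseteq> J - {x}" using \<open>x \<in> C\<close> \<open>C \<subseteq> J\<close> Z(1) by auto
  ultimately show ?thesis
    using positively_irredundant_negative_dependence[OF sub irred \<open>finite J\<close>] Z(2) \<open>ct x < 0\<close> by blast
qed

lemma positive_circuit_lift:
  assumes fin: "finite I" and sub: "subspace L" and "J \<subseteq> I"
    and C: "positive_circuit L C" "C \<subseteq> J" and irred: "positively_irredundant L J"
    and sp: "circuits_almost_positive L I"
    and Z: "Z \<subseteq> J - span (L \<union> C)" "positive_circuit (span (L \<union> C)) Z"
  shows "positive_circuit L Z"
proof -
  define L' where "L' = span (L \<union> C)"
  define I' where "I' = J - L'"
  have "L \<subseteq> L'" "C \<subseteq> L'" using span_superset[of "L \<union> C"] by (auto simp: L'_def)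
  have I'_sub: "I' \<subseteq> I - C" using \<open>J \<subseteq> I\<close> \<open>C \<subseteq> L'\<close> by (auto simp: I'_def)
  then have "finite I'" using fin finite_subset by blast
  have "finite J" using \<open>J \<subseteq> I\<close> fin finite_subset by blast
  have ZI': "Z \<subseteq> I'" using Z(1) by (simp add: I'_def L'_def)
  obtain \<mu> where "Z \<noteq> {}" and \<mu>: "\<forall>z\<in>Z. \<mu> z > 0" "(\<Sum>z\<in>Z. \<mu> z *\<^sub>R z) \<in> L'"
    and unique: "\<forall>e. (\<Sum>z\<in>Z. e z *\<^sub>R z) \<in> L' \<longrightarrow> (\<exists>s. \<forall>z\<in>Z. e z = s * \<mu> z)"
    using Z(2) unfolding positive_circuit_def L'_def by blast
  define c where "c j = (if j \<in> Z then \<mu> j else 0)" for j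
  have "circuit L' I' c" unfolding c_def
    by (rule circuit_extend_zero[OF \<open>finite I'\<close> ZI' _ \<mu>(2) unique]) (use \<open>Z \<noteq> {}\<close> \<mu>(1) in force)
  then obtain ct where ct: "circuit L I ct" "\<forall>j\<in>I'. ct j = c j" "\<forall>j\<in>C. ct j \<le> 0"
      "\<forall>j\<in>I - (C \<union> I'). ct j = 0"
      and ct_split: "(\<Sum>j\<in>I. ct j *\<^sub>R j) = (\<Sum>j\<in>C. ct j *\<^sub>R j) + (\<Sum>j\<in>I'. c j *\<^sub>R j)"
    using circuit_lift[OF fin sub C(1) _ I'_sub] C(2) \<open>J \<subseteq> I\<close> unfolding L'_def by blast
  have "(\<Sum>j\<in>I'. c j *\<^sub>R j) = (\<Sum>j\<in>Z. c j *\<^sub>R j)"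
    by (rule sum.mono_neutral_right) (use \<open>finite I'\<close> ZI' in \<open>auto simp: c_def\<close>)
  also have "\<dots> = (\<Sum>z\<in>Z. \<mu> z *\<^sub>R z)" by (rule sum.cong) (auto simp: c_def)
  finally have dep: "(\<Sum>j\<in>C. ct j *\<^sub>R j) + (\<Sum>z\<in>Z. \<mu> z *\<^sub>R z) \<in> L"
    using ct(1) ct_split unfolding circuit_def by simp
  have "2 \<le> card Z"
    using Z(1) by (intro positive_circuit_card_ge_2[OF subspace_span Z(2)]) blast
  also have "card Z \<le> card {j\<in>I. ct j > 0}"
    using ZI' I'_sub ct(2) \<mu>(1) fin by (intro card_mono) (auto simp: c_def)
  finally have "2 \<le> card {j\<in>I. ct j > 0}" .
  moreover have "card {j\<in>I. ct j > 0} \<le> 1 \<or> card {j\<in>I. ct j < 0} \<le> 1"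
    using sp ct(1) unfolding circuits_almost_positive_def by blast
  ultimately have "card {j\<in>I. ct j < 0} \<le> 1" by linarith
  moreover have "card {j\<in>C. ct j < 0} \<le> card {j\<in>I. ct j < 0}"
    using C(2) \<open>J \<subseteq> I\<close> fin by (intro card_mono) auto
  moreover have "Z \<subseteq> J - C" "\<forall>z\<in>Z. \<mu> z \<ge> 0" using Z(1) \<open>C \<subseteq> L'\<close> \<mu>(1) by (auto simp: L'_def)
  ultimately have "(\<Sum>z\<in>Z. \<mu> z *\<^sub>R z) \<in> L"
    using positively_irredundant_single_negative[OF sub irred \<open>finite J\<close> C(2) ct(3) _ _ _ dep] by linarith
  moreover have "\<forall>e. (\<Sum>z\<in>Z. e z *\<^sub>R z) \<in> L \<longrightarrow> (\<exists>s. \<forall>z\<in>Z. e z = s * \<mu> z)"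
    using unique \<open>L \<subseteq> L'\<close> by blast
  ultimately show ?thesis
    using Z(2) \<mu>(1) unfolding positive_circuit_def by blast
qed

lemma span_Un_span_left: "span (span A \<union> B) = span (A \<union> B)"
proof
  show "span (span A \<union> B) \<subseteq> span (A \<union> B)"
    by (rule span_minimal) (use span_mono[of A "A \<union> B"] span_superset[of "A \<union> B"] in auto)
  show "span (A \<union> B) \<subseteq> span (span A \<union> B)"
    by (rule span_mono) (use span_superset[of A] in auto)
qed

lemma independent_mod_case_nat:
  assumes sub: "subspace L" and "L \<subseteq> L'" "subspace L'" "span C \<subseteq> L'"
    and Z: "\<forall>i<k. positive_circuit L (Z i)" and Z_L': "\<forall>i<k. positive_circuit L' (Z i)"
    and indep: "\<forall>v. (\<forall>i<k. v i \<in> span (Z i)) \<and> (\<Sum>i<k. v i) \<in> L' \<longrightarrow> (\<forall>i<k. v i \<in> L')"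
    and v: "\<forall>i<Suc k. v i \<in> span (case_nat C Z i)" and vL: "(\<Sum>i<Suc k. v i) \<in> L"
  shows "\<forall>i<Suc k. v i \<in> L"
proof -
  have "v 0 \<in> span C" and v_Suc: "\<forall>i<k. v (Suc i) \<in> span (Z i)" using v by auto
  then have "v 0 \<in> L'" using \<open>span C \<subseteq> L'\<close> by blast
  have sum_Suc: "(\<Sum>i<k. v (Suc i)) = (\<Sum>i<Suc k. v i) - v 0"
    unfolding sum.lessThan_Suc_shift by simp
  also have "\<dots> \<in> L'"
    using vL \<open>L \<subseteq> L'\<close> \<open>v 0 \<in> L'\<close> by (intro subspace_diff[OF \<open>subspace L'\<close>]) auto
  finally have "\<forall>i<k. v (Suc i) \<in> L'"
    using indep[rule_format, of "\<lambda>i. v (Suc i)"] v_Suc by blast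
  have Suc_L: "\<forall>i<k. v (Suc i) \<in> L"
  proof (intro allI impI)
    fix i assume "i < k"
    then show "v (Suc i) \<in> L"
      using positive_circuit_span_Int[OF sub \<open>L \<subseteq> L'\<close> Z[rule_format, OF \<open>i < k\<close>]
          Z_L'[rule_format, OF \<open>i < k\<close>]] v_Suc \<open>\<forall>i<k. v (Suc i) \<in> L'\<close> by blast
  qed
  then have "(\<Sum>i<k. v (Suc i)) \<in> L" by (intro subspace_sum[OF sub]) auto
  moreover have "v 0 = (\<Sum>i<Suc k. v i) - (\<Sum>i<k. v (Suc i))" using sum_Suc by simp
  ultimately have "v 0 \<in> L" using vL sub by (simp add: subspace_diff)
  then show ?thesis using Suc_L by (auto simp: less_Suc_eq_0_disj)
qed

lemma circuit_decomposition_Suc: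
  assumes sub: "subspace L" and C: "positive_circuit L C" "C \<subseteq> I"
    and I': "I' \<subseteq> I" "I' \<inter> span (L \<union> C) = {}" and span_I: "span I \<subseteq> span (L \<union> C \<union> I')"
    and dec: "circuit_decomposition (span (L \<union> C)) I' k Z"
    and Z: "\<forall>i<k. positive_circuit L (Z i)"
  shows "circuit_decomposition L I (Suc k) (case_nat C Z)"
proof -
  define L' where "L' = span (L \<union> C)"
  have "subspace L'" by (simp add: L'_def)
  have "L \<subseteq> L'" "C \<subseteq> L'" using span_superset[of "L \<union> C"] by (auto simp: L'_def)
  have "span C \<subseteq> L'" unfolding L'_def by (rule span_mono) blast
  have Z_I': "\<forall>i<k. Z i \<subseteq> I'" and Z_L': "\<forall>i<k. positive_circuit L' (Z i)"
    and disj: "disjoint_family_on Z {..<k}"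
    and indep: "\<forall>v. (\<forall>i<k. v i \<in> span (Z i)) \<and> (\<Sum>i<k. v i) \<in> L' \<longrightarrow> (\<forall>i<k. v i \<in> L')"
    and span_I': "span I' \<subseteq> span (L' \<union> (\<Union>i<k. Z i))"
    using dec unfolding circuit_decomposition_def L'_def by auto
  have "\<forall>i<Suc k. case_nat C Z i \<subseteq> I \<and> positive_circuit L (case_nat C Z i)"
  proof (intro allI impI)
    fix i assume "i < Suc k"
    then show "case_nat C Z i \<subseteq> I \<and> positive_circuit L (case_nat C Z i)"
      using C Z Z_I' I'(1) by (cases i) (auto, blast)
  qed
  moreover have "disjoint_family_on (case_nat C Z) {..<Suc k}"
    unfolding disjoint_family_on_def
  proof (intro ballI impI)
    fix i j assume "i \<in> {..<Suc k}" "j \<in> {..<Suc k}" "i \<noteq> j"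
    moreover have "C \<inter> Z m = {}" if "m < k" for m
      using Z_I' I'(2) \<open>C \<subseteq> L'\<close> that unfolding L'_def by blast
    ultimately show "case_nat C Z i \<inter> case_nat C Z j = {}"
      using disj unfolding disjoint_family_on_def by (cases i; cases j) auto
  qed
  moreover have "\<forall>i<Suc k. v i \<in> L"
    if "\<forall>i<Suc k. v i \<in> span (case_nat C Z i)" "(\<Sum>i<Suc k. v i) \<in> L" for v
    using independent_mod_case_nat[OF sub \<open>L \<subseteq> L'\<close> \<open>subspace L'\<close> \<open>span C \<subseteq> L'\<close> Z Z_L' indep that] .
  moreover have "span I \<subseteq> span (L \<union> (\<Union>i<Suc k. case_nat C Z i))"
  proof -
    have "(\<Union>i<Suc k. case_nat C Z i) = C \<union> (\<Union>i<k. Z i)"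
      by (simp add: lessThan_Suc_eq_insert_0 image_image)
    moreover have "I' \<subseteq> span (L \<union> C \<union> (\<Union>i<k. Z i))"
      using span_I' span_superset[of I'] by (auto simp: L'_def span_Un_span_left)
    then have "span (L \<union> C \<union> I') \<subseteq> span (L \<union> C \<union> (\<Union>i<k. Z i))"
      by (intro span_minimal) (use span_superset[of "L \<union> C \<union> (\<Union>i<k. Z i)"] in auto)
    ultimately show ?thesis using span_I by (simp add: Un_assoc)
  qed
  ultimately show ?thesis unfolding circuit_decomposition_def by blast
qed

lemma totally_cyclic_contraction_step:
  assumes fin: "finite I" and sub: "subspace L" and "I \<inter> L = {}" and "I \<noteq> {}"
    and tc: "totally_cyclic L I" and sp: "circuits_almost_positive L I"
  obtains J C where "J \<subseteq> I" "positive_circuit L C" "C \<subseteq> J" "positively_irredundant L J"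
    "span I \<subseteq> span (L \<union> C \<union> (J - span (L \<union> C)))" "card (J - span (L \<union> C)) < card I"
    "totally_cyclic (span (L \<union> C)) (J - span (L \<union> C))"
    "circuits_almost_positive (span (L \<union> C)) (J - span (L \<union> C))"
proof -
  obtain J where JI: "J \<subseteq> I" and tcJ: "totally_cyclic L J" and span_J: "span I \<subseteq> span (L \<union> J)"
    and irred: "positively_irredundant L J"
    using totally_cyclic_irredundant_subset[OF fin sub tc] by blast
  have "finite J" using JI fin finite_subset by blast
  have "J \<noteq> {}"
  proof
    assume "J = {}"
    then have "I \<subseteq> L" using span_J span_superset[of I] sub[folded span_eq_iff] by auto
    then show False using \<open>I \<noteq> {}\<close> \<open>I \<inter> L = {}\<close> by blast
  qed
  obtain C where C: "positive_circuit L C" "C \<subseteq> J"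
    using totally_cyclic_has_positive_circuit[OF \<open>finite J\<close> sub \<open>J \<noteq> {}\<close> tcJ] by blast
  define L' where "L' = span (L \<union> C)"
  have "L \<subseteq> L'" "C \<subseteq> L'" using span_superset[of "L \<union> C"] by (auto simp: L'_def)
  have sub_I: "J - L' \<subseteq> I - C" using JI \<open>C \<subseteq> L'\<close> by blast
  have "C \<noteq> {}" using C(1) unfolding positive_circuit_def by blast
  then have "J - L' \<subset> I" using sub_I C(2) JI by blast
  then have card_red: "card (J - L') < card I" using fin psubset_card_mono by blast
  have tc_red: "totally_cyclic L' (J - L')"
    using \<open>L \<subseteq> L'\<close> by (intro totally_cyclic_contract[OF \<open>finite J\<close> _ _ tcJ]) (simp_all add: L'_def)
  have sp_red: "circuits_almost_positive L' (J - L')" unfolding L'_def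
    using C JI sub_I by (intro circuits_almost_positive_contract[OF fin sub C(1) _ _ sp]) (auto simp: L'_def)
  have span_red: "span I \<subseteq> span (L \<union> C \<union> (J - L'))"
  proof -
    have "L' \<subseteq> span (L \<union> C \<union> (J - L'))" unfolding L'_def by (rule span_mono) blast
    then have "L \<union> J \<subseteq> span (L \<union> C \<union> (J - L'))" using span_superset[of "L \<union> C \<union> (J - L')"] by blast
    then show ?thesis using span_J span_minimal[OF _ subspace_span] by blast
  qed
  show thesis
    using that[OF JI C irred span_red[unfolded L'_def] card_red[unfolded L'_def]
        tc_red[unfolded L'_def] sp_red[unfolded L'_def]] .
qed

theorem circuit_decomposition_exists:
  assumes "finite I" "subspace L" "I \<inter> L = {}" "totally_cyclic L I" "circuits_almost_positive L I"
  shows "\<exists>k Z. circuit_decomposition L I k Z"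
  using assms
proof (induction "card I" arbitrary: I L rule: less_induct)
  case less
  show ?case
  proof (cases "I = {}")
    case True
    then have "circuit_decomposition L I 0 Z" for Z
      unfolding circuit_decomposition_def by (simp add: disjoint_family_on_def span_0)
    then show ?thesis by blast
  next
    case False
    obtain J C where JI: "J \<subseteq> I" and C: "positive_circuit L C" "C \<subseteq> J"
      and irred: "positively_irredundant L J" and reduced: "span I \<subseteq> span (L \<union> C \<union> (J - span (L \<union> C)))"
      "card (J - span (L \<union> C)) < card I" "totally_cyclic (span (L \<union> C)) (J - span (L \<union> C))"
      "circuits_almost_positive (span (L \<union> C)) (J - span (L \<union> C))"
      using totally_cyclic_contraction_step[OF less.prems(1-3) False less.prems(4,5)] by blast
    have "finite (J - span (L \<union> C))" using JI less.prems(1) finite_subset by blast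
    moreover have "(J - span (L \<union> C)) \<inter> span (L \<union> C) = {}" by blast
    ultimately obtain k Z where dec: "circuit_decomposition (span (L \<union> C)) (J - span (L \<union> C)) k Z"
      using less.hyps[OF reduced(2) _ subspace_span _ reduced(3,4)] by blast
    have "\<forall>i<k. positive_circuit L (Z i)"
    proof (intro allI impI)
      fix i assume "i < k"
      then have "Z i \<subseteq> J - span (L \<union> C)" "positive_circuit (span (L \<union> C)) (Z i)"
        using dec unfolding circuit_decomposition_def by auto
      then show "positive_circuit L (Z i)"
        by (rule positive_circuit_lift[OF less.prems(1,2) JI C irred less.prems(5)])
    qed
    then have "circuit_decomposition L I (Suc k) (case_nat C Z)"
      by (intro circuit_decomposition_Suc[OF less.prems(2) C(1) _ _ _ reduced(1) dec])
        (use C(2) JI in blast)+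
    then show ?thesis by blast
  qed
qed

section \<open>Facet normals of full-dimensional polytopes\<close>

lemma supp_val_eq_max:
  assumes "\<forall>x\<in>S. u \<bullet> x \<le> b" "p \<in> S" "u \<bullet> p = b"
  shows "supp_val S u = b"
  unfolding supp_val_def using assms by (intro cSup_eq_maximum) auto

lemma inner_le_supp_val:
  assumes "bounded S" "x \<in> S"
  shows "u \<bullet> x \<le> supp_val S u"
proof -
  have "bounded ((\<lambda>y. u \<bullet> y) ` S)"
    using assms(1) bounded_linear_inner_right by (rule bounded_linear_image)
  then show ?thesis
    unfolding supp_val_def using assms(2) by (intro cSUP_upper bounded_imp_bdd_above)
qed

lemma facet_unit_normal_unique:
  fixes S :: "'a::euclidean_space set"
  assumes full: "aff_dim S = int DIM('a)" and "F facet_of S"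
    and "norm u = 1" "norm v = 1"
    and Fu: "F = S \<inter> {x. u \<bullet> x = \<alpha>}" and Fv: "F = S \<inter> {x. v \<bullet> x = \<beta>}"
    and Su: "\<forall>x\<in>S. u \<bullet> x \<le> \<alpha>" and Sv: "\<forall>x\<in>S. v \<bullet> x \<le> \<beta>"
  shows "u = v"
proof -
  have "u \<noteq> 0" "v \<noteq> 0" and uu: "u \<bullet> u = 1" and vv: "v \<bullet> v = 1"
    using assms(3,4) by (auto simp: norm_eq_1)
  have "F \<noteq> {}" and dim_F: "aff_dim F = int DIM('a) - 1"
    using assms(2) full unfolding facet_of_def by auto
  have hull_hyperplane: "affine hull F = {x. w \<bullet> x = \<gamma>}"
    if "w \<noteq> 0" and "F = S \<inter> {x. w \<bullet> x = \<gamma>}" for w \<gamma>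
  proof (rule affine_dim_equal)
    show "affine hull F \<subseteq> {x. w \<bullet> x = \<gamma>}"
      using that(2) by (intro hull_minimal) (auto simp: affine_hyperplane)
    show "aff_dim (affine hull F) = aff_dim {x. w \<bullet> x = \<gamma>}" using dim_F that(1) by simp
  qed (use \<open>F \<noteq> {}\<close> affine_hyperplane in auto)
  obtain p where "p \<in> F" using \<open>F \<noteq> {}\<close> by blast
  then have pu: "u \<bullet> p = \<alpha>" and pv: "v \<bullet> p = \<beta>" using Fu Fv by auto
  define w where "w = v - (v \<bullet> u) *\<^sub>R u"
  have uw: "u \<bullet> w = 0" using uu by (simp add: w_def inner_diff_right inner_commute)
  then have "p + w \<in> affine hull F"
    using pu hull_hyperplane[OF \<open>u \<noteq> 0\<close> Fu] by (simp add: inner_add_right)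
  then have "v \<bullet> w = 0" using pv hull_hyperplane[OF \<open>v \<noteq> 0\<close> Fv] by (simp add: inner_add_right)
  then have "w \<bullet> w = 0" using uw by (simp add: w_def inner_diff_left)
  then have v_eq: "v = (v \<bullet> u) *\<^sub>R u" by (simp add: w_def)
  have "v \<bullet> v = (v \<bullet> u) * (v \<bullet> u) * (u \<bullet> u)"
    by (subst (1 2) v_eq) (simp add: algebra_simps)
  then have "(v \<bullet> u) * (v \<bullet> u) = 1" using uu vv by simp
  then consider "v \<bullet> u = 1" | "v \<bullet> u = -1" by (metis mult_cancel_left1 square_eq_1_iff)
  then show ?thesis
  proof cases
    case 1
    then show ?thesis using v_eq by simp
  next
    case 2
    \<comment> \<open>opposite normals would squeeze the full-dimensional S into a hyperplane\<close>
    then have "v = - u" using v_eq by simp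
    then have "\<beta> = - \<alpha>" using pu pv by simp
    then have "S \<subseteq> {x. u \<bullet> x = \<alpha>}" using Su Sv \<open>v = - u\<close> by (force simp: inner_minus_left)
    then have "aff_dim S \<le> aff_dim {x. u \<bullet> x = \<alpha>}" by (rule aff_dim_subset)
    then show ?thesis using full \<open>u \<noteq> 0\<close> by simp
  qed
qed

lemma polyhedron_minimal_unit_halfspaces:
  fixes P :: "'a::euclidean_space set"
  assumes "polyhedron P"
  obtains F a b where "finite F" "P = affine hull P \<inter> \<Inter>F"
    "\<And>h. h \<in> F \<Longrightarrow> norm (a h) = 1 \<and> h = {x. a h \<bullet> x \<le> b h}"
    "\<And>F'. F' \<subset> F \<Longrightarrow> P \<subset> affine hull P \<inter> \<Inter>F'"
proof -
  obtain F where "finite F" and P_eq: "P = affine hull P \<inter> \<Inter>F"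
    and halfspaces: "\<And>h. h \<in> F \<Longrightarrow> \<exists>a b. a \<noteq> 0 \<and> h = {x. a \<bullet> x \<le> b}"
    and min: "\<And>F'. F' \<subset> F \<Longrightarrow> P \<subset> affine hull P \<inter> \<Inter>F'"
    using assms by (simp add: polyhedron_Int_affine_minimal) meson
  have "\<forall>h\<in>F. \<exists>a b. norm a = 1 \<and> h = {x. a \<bullet> x \<le> b}"
  proof
    fix h assume "h \<in> F"
    then obtain a b where "a \<noteq> 0" "h = {x. a \<bullet> x \<le> b}" using halfspaces by blast
    then have "norm (a /\<^sub>R norm a) = 1" "h = {x. (a /\<^sub>R norm a) \<bullet> x \<le> b / norm a}"
      by (auto simp: field_simps)
    then show "\<exists>a b. norm a = 1 \<and> h = {x. a \<bullet> x \<le> b}" by blast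
  qed
  then obtain a b where "\<forall>h\<in>F. norm (a h) = 1 \<and> h = {x. a h \<bullet> x \<le> b h}"
    by metis
  then show thesis using that[OF \<open>finite F\<close> P_eq _ min] by blast
qed

lemma polytope_facet_normals:
  fixes P :: "'a::euclidean_space set"
  assumes "polytope P" and full: "aff_dim P = int DIM('a)"
  shows "finite (facet_normals P)" "P = {x. \<forall>u\<in>facet_normals P. u \<bullet> x \<le> supp_val P u}"
proof -
  have "polyhedron P" "bounded P" using assms(1) polytope_eq_bounded_polyhedron by auto
  have hull_P: "affine hull P = UNIV" using full aff_dim_eq_full by blast
  obtain F a b where "finite F" and P_eq: "P = affine hull P \<inter> \<Inter>F"
    and ab: "\<And>h. h \<in> F \<Longrightarrow> norm (a h) = 1 \<and> h = {x. a h \<bullet> x \<le> b h}"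
    and min: "\<And>F'. F' \<subset> F \<Longrightarrow> P \<subset> affine hull P \<inter> \<Inter>F'"
    using polyhedron_minimal_unit_halfspaces[OF \<open>polyhedron P\<close>] by blast
  have ab': "a h \<noteq> 0 \<and> h = {x. a h \<bullet> x \<le> b h}" if "h \<in> F" for h
  proof -
    have "norm (a h) = 1" using ab that by blast
    then have "a h \<noteq> 0" by auto
    then show ?thesis using ab that by blast
  qed
  note facets = facet_of_polyhedron_explicit[OF \<open>finite F\<close> P_eq ab' min]
  have "P = affine hull P \<inter> \<Inter>F" by (rule P_eq)
  also have "\<dots> = \<Inter>F" by (simp add: hull_P)
  finally have P_Int: "P = \<Inter>F" .
  have P_le: "\<forall>x\<in>P. a h \<bullet> x \<le> b h" if "h \<in> F" for h
  proof -
    have "P \<subseteq> h" using that by (subst P_Int) (rule Inter_lower)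
    then show ?thesis using ab[rule_format, OF that] by blast
  qed
  have supp_a: "supp_val P (a h) = b h" and a_normal: "a h \<in> facet_normals P" if "h \<in> F" for h
  proof -
    have facet: "(P \<inter> {x. a h \<bullet> x = b h}) facet_of P" using facets that by blast
    then obtain p where "p \<in> P" "a h \<bullet> p = b h" unfolding facet_of_def by blast
    then show supp: "supp_val P (a h) = b h" using supp_val_eq_max P_le[OF that] by blast
    show "a h \<in> facet_normals P"
      unfolding facet_normals_def using facet supp conjunct1[OF ab[rule_format, OF that]] by auto
  qed
  have "facet_normals P \<subseteq> a ` F"
  proof
    fix u assume "u \<in> facet_normals P"
    then obtain G where "norm u = 1" "G facet_of P" and Gu: "G = P \<inter> {x. u \<bullet> x = supp_val P u}"
      unfolding facet_normals_def by blast
    moreover obtain h where "h \<in> F" and "G = P \<inter> {x. a h \<bullet> x = b h}" using facets \<open>G facet_of P\<close> by blast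
    ultimately have "u = a h"
      using conjunct1[OF ab[rule_format, OF \<open>h \<in> F\<close>]] P_le[OF \<open>h \<in> F\<close>] inner_le_supp_val[OF \<open>bounded P\<close>]
      by (intro facet_unit_normal_unique[OF full \<open>G facet_of P\<close> \<open>norm u = 1\<close>]) auto
    then show "u \<in> a ` F" using \<open>h \<in> F\<close> by blast
  qed
  then have N_eq: "facet_normals P = a ` F" using a_normal by blast
  then show "finite (facet_normals P)" using \<open>finite F\<close> by simp
  have "{x. \<forall>u\<in>facet_normals P. u \<bullet> x \<le> supp_val P u} = {x. \<forall>h\<in>F. a h \<bullet> x \<le> b h}"
    unfolding N_eq using supp_a by auto
  also have "\<dots> = \<Inter>F"
  proof -
    have "h = {x. a h \<bullet> x \<le> b h}" if "h \<in> F" for h using ab[rule_format, OF that] by blast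
    then show ?thesis by blast
  qed
  finally show "P = {x. \<forall>u\<in>facet_normals P. u \<bullet> x \<le> supp_val P u}" using P_Int by metis
qed

definition positively_spanning :: "'a::real_vector set \<Rightarrow> bool" where
  "positively_spanning X \<longleftrightarrow> (\<forall>v. \<exists>c. (\<forall>u\<in>X. c u \<ge> 0) \<and> v = (\<Sum>u\<in>X. c u *\<^sub>R u))"

lemma convex_cone_hull_subset_nonneg_combinations:
  fixes X :: "'a::real_vector set"
  assumes "finite X"
  shows "convex_cone hull X \<subseteq> {v. \<exists>c. (\<forall>u\<in>X. c u \<ge> 0) \<and> v = (\<Sum>u\<in>X. c u *\<^sub>R u)}"
    (is "_ \<subseteq> ?K")
proof (rule hull_minimal)
  show "X \<subseteq> ?K"
  proof
    fix x assume "x \<in> X"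
    then have "x = (\<Sum>u\<in>X. (if u = x then 1 else 0) *\<^sub>R u)"
      using assms by (simp add: if_distrib[of "\<lambda>c. c *\<^sub>R _"] sum.delta' cong: if_cong)
    then show "x \<in> ?K" by (intro CollectI exI[of _ "\<lambda>u. if u = x then 1 else 0"]) auto
  qed
  show "convex_cone ?K"
    unfolding convex_cone_iff
  proof (intro conjI ballI allI impI)
    show "0 \<in> ?K" by (intro CollectI exI[of _ "\<lambda>_. 0"]) simp
  next
    fix x y assume "x \<in> ?K" "y \<in> ?K"
    then obtain c d where "\<forall>u\<in>X. c u \<ge> 0" "x = (\<Sum>u\<in>X. c u *\<^sub>R u)"
      and "\<forall>u\<in>X. d u \<ge> 0" "y = (\<Sum>u\<in>X. d u *\<^sub>R u)" by blast
    then show "x + y \<in> ?K"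
      by (intro CollectI exI[of _ "\<lambda>u. c u + d u"]) (simp add: scaleR_add_left sum.distrib)
  next
    fix x and t :: real assume "x \<in> ?K" "0 \<le> t"
    then obtain c where "\<forall>u\<in>X. c u \<ge> 0" "x = (\<Sum>u\<in>X. c u *\<^sub>R u)" by blast
    then show "t *\<^sub>R x \<in> ?K"
      using \<open>0 \<le> t\<close> by (intro CollectI exI[of _ "\<lambda>u. t * c u"]) (simp add: scaleR_sum_right)
  qed
qed

lemma bounded_halfspaces_no_recession:
  fixes X :: "'a::euclidean_space set"
  assumes "bounded P" "p \<in> P" and P_eq: "P = {x. \<forall>u\<in>X. u \<bullet> x \<le> g u}" and "\<forall>u\<in>X. u \<bullet> d \<le> 0"
  shows "d = 0"
proof (rule ccontr)
  assume "d \<noteq> 0"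
  obtain B where B: "\<forall>x\<in>P. norm x \<le> B" using \<open>bounded P\<close> bounded_iff by blast
  define t where "t = (B + norm p + 1) / norm d"
  have "norm p \<le> B" using B \<open>p \<in> P\<close> by blast
  then have "B + norm p + 1 > 0" using norm_ge_zero[of p] by linarith
  then have "t \<ge> 0" by (simp add: t_def)
  have "u \<bullet> (p + t *\<^sub>R d) \<le> g u" if "u \<in> X" for u
  proof -
    have "u \<bullet> p \<le> g u" using \<open>p \<in> P\<close> that P_eq by blast
    moreover have "t * (u \<bullet> d) \<le> 0"
      using assms(4) that \<open>t \<ge> 0\<close> by (simp add: mult_nonneg_nonpos)
    ultimately show ?thesis by (simp add: inner_add_right)
  qed
  then have "norm (p + t *\<^sub>R d) \<le> B" using B P_eq by blast
  moreover have "norm (t *\<^sub>R d) = B + norm p + 1"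
    using \<open>d \<noteq> 0\<close> \<open>B + norm p + 1 > 0\<close> by (simp add: t_def)
  moreover have "norm (t *\<^sub>R d) \<le> norm (p + t *\<^sub>R d) + norm p"
    using norm_triangle_ineq4[of "p + t *\<^sub>R d" p] by simp
  ultimately show False by simp
qed

lemma bounded_halfspaces_positively_spanning:
  fixes X :: "'a::euclidean_space set"
  assumes "finite X" "bounded P" "p \<in> P" "P = {x. \<forall>u\<in>X. u \<bullet> x \<le> g u}"
  shows "positively_spanning X"
  unfolding positively_spanning_def
proof
  fix v
  have "v \<in> convex_cone hull X"
  proof (rule ccontr)
    assume "v \<notin> convex_cone hull X"
    then obtain a b where ab: "a \<bullet> v < b" "\<forall>x\<in>convex_cone hull X. b < a \<bullet> x"
      using separating_hyperplane_closed_point[OF convex_convex_cone_hull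
          closed_convex_cone_hull[OF \<open>finite X\<close>]] by blast
    have "b < 0" using ab(2) convex_cone_hull_contains_0 by fastforce
    have "a \<bullet> u \<ge> 0" if "u \<in> X" for u
    proof (rule ccontr)
      assume "\<not> a \<bullet> u \<ge> 0"
      \<comment> \<open>the ray through u would leave the half-space b < a.x\<close>
      then have "b / (a \<bullet> u) \<ge> 0" using \<open>b < 0\<close> by (simp add: divide_nonpos_neg)
      then have "(b / (a \<bullet> u)) *\<^sub>R u \<in> convex_cone hull X"
        using conic_convex_cone_hull hull_inc[OF that] unfolding conic_def by blast
      then have "b < (b / (a \<bullet> u)) * (a \<bullet> u)" using ab(2) by fastforce
      then show False using \<open>\<not> a \<bullet> u \<ge> 0\<close> by simp
    qed
    then have "\<forall>u\<in>X. u \<bullet> (- a) \<le> 0" by (simp add: inner_commute)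
    then have "- a = 0" by (rule bounded_halfspaces_no_recession[OF assms(2-4)])
    then show False using ab(1) \<open>b < 0\<close> by simp
  qed
  then show "\<exists>c. (\<forall>u\<in>X. c u \<ge> 0) \<and> v = (\<Sum>u\<in>X. c u *\<^sub>R u)"
    using convex_cone_hull_subset_nonneg_combinations[OF \<open>finite X\<close>] by blast
qed

lemma inner_nonneg_combination_le:
  assumes "\<forall>u\<in>X. c u \<ge> 0" "\<forall>u\<in>X. u \<bullet> x \<le> h u"
  shows "(\<Sum>u\<in>X. c u *\<^sub>R u) \<bullet> x \<le> (\<Sum>u\<in>X. c u * h u)"
proof -
  have "(\<Sum>u\<in>X. c u *\<^sub>R u) \<bullet> x = (\<Sum>u\<in>X. c u * (u \<bullet> x))" by (simp add: inner_sum_left)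
  also have "\<dots> \<le> (\<Sum>u\<in>X. c u * h u)" using assms by (intro sum_mono mult_left_mono) auto
  finally show ?thesis .
qed

lemma positively_spanning_bounded_halfspaces:
  fixes X :: "'a::euclidean_space set"
  assumes "positively_spanning X"
  shows "bounded {x. \<forall>u\<in>X. u \<bullet> x \<le> h u}" (is "bounded ?P")
proof -
  have "\<forall>b. \<exists>M. \<forall>x\<in>?P. \<bar>x \<bullet> b\<bar> \<le> M"
  proof
    fix b :: 'a
    obtain c where c: "\<forall>u\<in>X. c u \<ge> 0" "b = (\<Sum>u\<in>X. c u *\<^sub>R u)"
      using assms unfolding positively_spanning_def by blast
    obtain c' where c': "\<forall>u\<in>X. c' u \<ge> 0" "- b = (\<Sum>u\<in>X. c' u *\<^sub>R u)"
      using assms unfolding positively_spanning_def by blast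
    have "\<bar>x \<bullet> b\<bar> \<le> max (\<Sum>u\<in>X. c u * h u) (\<Sum>u\<in>X. c' u * h u)" if "x \<in> ?P" for x
    proof -
      have x: "\<forall>u\<in>X. u \<bullet> x \<le> h u" using that by blast
      have "b \<bullet> x \<le> (\<Sum>u\<in>X. c u * h u)" using inner_nonneg_combination_le[OF c(1) x] c(2) by simp
      moreover have "(- b) \<bullet> x \<le> (\<Sum>u\<in>X. c' u * h u)"
        using inner_nonneg_combination_le[OF c'(1) x] c'(2) by simp
      ultimately show ?thesis by (auto simp: inner_commute)
    qed
    then show "\<exists>M. \<forall>x\<in>?P. \<bar>x \<bullet> b\<bar> \<le> M" by blast
  qed
  then have "\<exists>M. \<forall>b. \<forall>x\<in>?P. \<bar>x \<bullet> b\<bar> \<le> M b" by (rule choice)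
  then obtain M where M: "\<forall>b. \<forall>x\<in>?P. \<bar>x \<bullet> b\<bar> \<le> M b" by blast
  have "norm x \<le> (\<Sum>b\<in>Basis. M b)" if "x \<in> ?P" for x
  proof -
    have "norm x \<le> (\<Sum>b\<in>Basis. \<bar>x \<bullet> b\<bar>)" by (rule norm_le_l1)
    also have "\<dots> \<le> (\<Sum>b\<in>Basis. M b)" using M that by (intro sum_mono) blast
    finally show ?thesis .
  qed
  then show ?thesis unfolding bounded_iff by blast
qed

section \<open>Polytopes with prescribed facet normals\<close>

locale tight_halfspaces =
  fixes X :: "'a::euclidean_space set" and h :: "'a \<Rightarrow> real" and p :: "'a \<Rightarrow> 'a"
  assumes finite_X: "finite X" and unit: "\<And>u. u \<in> X \<Longrightarrow> norm u = 1"
    and spanning: "positively_spanning X"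
    and tight: "\<And>u. u \<in> X \<Longrightarrow> u \<bullet> p u = h u"
    and slack: "\<And>u v. u \<in> X \<Longrightarrow> v \<in> X \<Longrightarrow> v \<noteq> u \<Longrightarrow> v \<bullet> p u < h v"
begin

abbreviation poly :: "'a set" where "poly \<equiv> {x. \<forall>u\<in>X. u \<bullet> x \<le> h u}"

lemma witness_in_poly:
  assumes "u \<in> X" shows "p u \<in> poly"
proof -
  have "v \<bullet> p u \<le> h v" if "v \<in> X" for v
    using tight[OF assms] slack[OF assms that] by (cases "v = u") auto
  then show ?thesis by blast
qed

lemma polytope_poly: "polytope poly"
proof -
  have "polyhedron poly"
    unfolding polyhedron_def
  proof (intro exI conjI)
    show "finite ((\<lambda>u. {x. u \<bullet> x \<le> h u}) ` X)" using finite_X by simp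
    show "poly = \<Inter> ((\<lambda>u. {x. u \<bullet> x \<le> h u}) ` X)" by auto
    show "\<forall>S\<in>(\<lambda>u. {x. u \<bullet> x \<le> h u}) ` X. \<exists>a b. a \<noteq> 0 \<and> S = {x. a \<bullet> x \<le> b}"
    proof
      fix S assume "S \<in> (\<lambda>u. {x. u \<bullet> x \<le> h u}) ` X"
      then obtain u where "u \<in> X" "S = {x. u \<bullet> x \<le> h u}" by blast
      moreover have "u \<noteq> 0" using unit[OF \<open>u \<in> X\<close>] by auto
      ultimately show "\<exists>a b. a \<noteq> 0 \<and> S = {x. a \<bullet> x \<le> b}" by blast
    qed
  qed
  moreover have "bounded poly" by (rule positively_spanning_bounded_halfspaces[OF spanning])
  ultimately show ?thesis by (simp add: polytope_eq_bounded_polyhedron)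
qed

lemma supp_val_poly: "u \<in> X \<Longrightarrow> supp_val poly u = h u"
  using supp_val_eq_max[of poly u "h u" "p u"] witness_in_poly tight by blast

lemma exists_other_normal: "u \<in> X \<Longrightarrow> \<exists>v\<in>X. v \<noteq> u"
proof (rule ccontr)
  assume "u \<in> X" "\<not> (\<exists>v\<in>X. v \<noteq> u)"
  then have "X = {u}" by blast
  obtain c where "\<forall>w\<in>X. c w \<ge> 0" "- u = (\<Sum>w\<in>X. c w *\<^sub>R w)"
    using spanning unfolding positively_spanning_def by blast
  then have "c u \<ge> 0" "- u = c u *\<^sub>R u" using \<open>X = {u}\<close> by auto
  then have "(1 + c u) *\<^sub>R u = 0"
    by (simp add: scaleR_add_left \<open>- u = c u *\<^sub>R u\<close>[symmetric])
  moreover have "u \<noteq> 0" using unit[OF \<open>u \<in> X\<close>] by auto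
  ultimately show False using \<open>c u \<ge> 0\<close> by simp
qed

lemma slack_ball:
  assumes "u \<in> X"
  obtains e where "e > 0" "\<And>x v. dist (p u) x < e \<Longrightarrow> v \<in> X \<Longrightarrow> v \<noteq> u \<Longrightarrow> v \<bullet> x < h v"
proof -
  define e where "e = Min ((\<lambda>v. h v - v \<bullet> p u) ` (X - {u}))"
  have fin: "finite (X - {u})" using finite_X by simp
  have "X - {u} \<noteq> {}" using exists_other_normal[OF assms] by blast
  then have "e \<in> (\<lambda>v. h v - v \<bullet> p u) ` (X - {u})" unfolding e_def using fin by (intro Min_in) auto
  then obtain v where "v \<in> X" "v \<noteq> u" "e = h v - v \<bullet> p u" by blast
  then have "e > 0" using slack[OF assms] by simp
  moreover have "v \<bullet> x < h v" if "dist (p u) x < e" "v \<in> X" "v \<noteq> u" for x v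
  proof -
    have "v \<bullet> (x - p u) \<le> norm (x - p u)"
      using norm_cauchy_schwarz[of v "x - p u"] unit[OF \<open>v \<in> X\<close>] by simp
    also have "\<dots> < e" using that(1) by (simp add: dist_norm norm_minus_commute)
    also have "e \<le> h v - v \<bullet> p u" unfolding e_def using fin that(2,3) by simp
    finally show ?thesis by (simp add: inner_diff_right)
  qed
  ultimately show thesis using that by blast
qed

lemma aff_dim_poly_Int_hyperplane:
  assumes "u \<in> X"
  shows "aff_dim (poly \<inter> {x. u \<bullet> x = h u}) = int DIM('a) - 1"
proof -
  obtain e where "e > 0" and e: "\<And>x v. dist (p u) x < e \<Longrightarrow> v \<in> X \<Longrightarrow> v \<noteq> u \<Longrightarrow> v \<bullet> x < h v"
    using slack_ball[OF assms] by blast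
  have "u \<noteq> 0" using unit[OF assms] by auto
  have "ball (p u) e \<inter> {x. u \<bullet> x = h u} \<subseteq> poly \<inter> {x. u \<bullet> x = h u}"
  proof
    fix x assume x: "x \<in> ball (p u) e \<inter> {x. u \<bullet> x = h u}"
    have "v \<bullet> x \<le> h v" if "v \<in> X" for v
    proof (cases "v = u")
      case True
      then show ?thesis using x by simp
    next
      case False
      then show ?thesis using e[of x v] x that by simp
    qed
    then show "x \<in> poly \<inter> {x. u \<bullet> x = h u}" using x by blast
  qed
  then have "aff_dim (ball (p u) e \<inter> {x. u \<bullet> x = h u}) \<le> aff_dim (poly \<inter> {x. u \<bullet> x = h u})"
    by (rule aff_dim_subset)
  moreover have "aff_dim (ball (p u) e \<inter> {x. u \<bullet> x = h u}) = aff_dim {x. u \<bullet> x = h u}"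
  proof -
    have "p u \<in> ball (p u) e \<inter> {x. u \<bullet> x = h u}" using tight[OF assms] \<open>e > 0\<close> by simp
    then have "{x. u \<bullet> x = h u} \<inter> ball (p u) e \<noteq> {}" by blast
    then have "aff_dim ({x. u \<bullet> x = h u} \<inter> ball (p u) e) = aff_dim {x. u \<bullet> x = h u}"
      by (rule aff_dim_convex_Int_open[OF convex_hyperplane open_ball])
    then show ?thesis by (simp add: Int_commute)
  qed
  ultimately have "aff_dim (poly \<inter> {x. u \<bullet> x = h u}) \<ge> int DIM('a) - 1"
    using \<open>u \<noteq> 0\<close> by simp
  moreover have "aff_dim (poly \<inter> {x. u \<bullet> x = h u}) \<le> aff_dim {x. u \<bullet> x = h u}"
    by (rule aff_dim_subset) blast
  ultimately show ?thesis using \<open>u \<noteq> 0\<close> by simp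
qed

lemma aff_dim_poly: "aff_dim poly = int DIM('a)"
proof -
  obtain u where "u \<in> X"
    using spanning nonempty_Basis unfolding positively_spanning_def
    by (metis all_not_in_conv empty_iff sum.empty zero_neq_one norm_zero norm_Basis)
  then obtain v where "v \<in> X" "v \<noteq> u" using exists_other_normal by blast
  have "convex poly" using polytope_poly by (simp add: polytope_imp_convex)
  have face: "(poly \<inter> {x. u \<bullet> x = h u}) face_of poly"
    using \<open>convex poly\<close> by (rule face_of_Int_supporting_hyperplane_le) (use \<open>u \<in> X\<close> in blast)
  have "p v \<notin> {x. u \<bullet> x = h u}" using slack[OF \<open>v \<in> X\<close> \<open>u \<in> X\<close>] \<open>v \<noteq> u\<close> by simp
  then have "poly \<inter> {x. u \<bullet> x = h u} \<noteq> poly" using witness_in_poly[OF \<open>v \<in> X\<close>] by blast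
  then have "aff_dim (poly \<inter> {x. u \<bullet> x = h u}) < aff_dim poly"
    by (rule face_of_aff_dim_lt[OF \<open>convex poly\<close> face])
  then show ?thesis using aff_dim_poly_Int_hyperplane[OF \<open>u \<in> X\<close>] aff_dim_le_DIM[of poly] by simp
qed

lemma facet_of_poly: "u \<in> X \<Longrightarrow> (poly \<inter> {x. u \<bullet> x = h u}) facet_of poly"
  unfolding facet_of_def
  using face_of_Int_supporting_hyperplane_le[OF polytope_imp_convex[OF polytope_poly], of u "h u"]
    aff_dim_poly_Int_hyperplane aff_dim_poly witness_in_poly tight by fastforce

lemma facet_of_poly_cases:
  assumes "F facet_of poly"
  obtains u where "u \<in> X" "F = poly \<inter> {x. u \<bullet> x = h u}"
proof -
  define Fam where "Fam = (\<lambda>u. {x. u \<bullet> x \<le> h u}) ` X"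
  define nrm where "nrm S = (SOME u. u \<in> X \<and> S = {x. u \<bullet> x \<le> h u})" for S
  have nrm: "nrm S \<in> X \<and> S = {x. nrm S \<bullet> x \<le> h (nrm S)}" if S: "S \<in> Fam" for S
    unfolding nrm_def by (rule someI_ex) (use S in \<open>auto simp: Fam_def\<close>)
  have "affine hull poly = UNIV" using aff_dim_poly aff_dim_eq_full by blast
  have "poly = \<Inter>Fam" by (auto simp: Fam_def)
  then have poly_eq: "poly = affine hull poly \<inter> \<Inter>Fam" using \<open>affine hull poly = UNIV\<close> by simp
  have halfspace: "nrm S \<noteq> 0 \<and> S = {x. nrm S \<bullet> x \<le> h (nrm S)}" if S: "S \<in> Fam" for S
  proof -
    have "nrm S \<in> X" using nrm[OF S] by blast
    then have "nrm S \<noteq> 0" using unit by force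
    then show ?thesis using nrm[OF S] by blast
  qed
  have minimal: "poly \<subset> affine hull poly \<inter> \<Inter>Fam'" if sub: "Fam' \<subset> Fam" for Fam'
  proof -
    obtain w where "w \<in> X" and w: "{x. w \<bullet> x \<le> h w} \<notin> Fam'" using sub unfolding Fam_def by blast
    obtain e where "e > 0"
      and e: "\<And>x v. dist (p w) x < e \<Longrightarrow> v \<in> X \<Longrightarrow> v \<noteq> w \<Longrightarrow> v \<bullet> x < h v"
      using slack_ball[OF \<open>w \<in> X\<close>] by blast
    \<comment> \<open>a point just beyond the facet of w, still strictly inside all other half-spaces\<close>
    define q where "q = p w + (e / 2) *\<^sub>R w"
    have "w \<bullet> w = 1" using unit[OF \<open>w \<in> X\<close>] by (simp add: norm_eq_1)
    then have "w \<bullet> q > h w" using tight[OF \<open>w \<in> X\<close>] \<open>e > 0\<close> by (simp add: q_def inner_add_right)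
    then have "q \<notin> poly" using \<open>w \<in> X\<close> by (auto simp: not_le[symmetric])
    moreover have "q \<in> \<Inter>Fam'"
    proof
      fix S assume "S \<in> Fam'"
      then obtain v where "v \<in> X" and S: "S = {x. v \<bullet> x \<le> h v}" using sub unfolding Fam_def by blast
      then have "v \<noteq> w" using \<open>S \<in> Fam'\<close> w by blast
      have "dist (p w) q = e / 2" using \<open>e > 0\<close> unit[OF \<open>w \<in> X\<close>] by (simp add: q_def dist_norm)
      then have "dist (p w) q < e" using \<open>e > 0\<close> by simp
      then have "v \<bullet> q < h v" using e \<open>v \<in> X\<close> \<open>v \<noteq> w\<close> by blast
      then show "q \<in> S" unfolding S by simp
    qed
    moreover have "\<Inter>Fam \<subseteq> \<Inter>Fam'" using sub by blast
    ultimately have "q \<in> \<Inter>Fam' - poly" "poly \<subseteq> \<Inter>Fam'" using \<open>poly = \<Inter>Fam\<close> by auto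
    then show ?thesis unfolding \<open>affine hull poly = UNIV\<close> by blast
  qed
  have "finite Fam" using finite_X by (simp add: Fam_def)
  obtain S where "S \<in> Fam" "F = poly \<inter> {x. nrm S \<bullet> x = h (nrm S)}"
    using facet_of_polyhedron_explicit[OF \<open>finite Fam\<close> poly_eq halfspace minimal] assms by blast
  then show thesis using that nrm by blast
qed

lemma facet_normals_poly: "facet_normals poly = X"
proof
  show "X \<subseteq> facet_normals poly"
  proof
    fix u assume "u \<in> X"
    then have "poly \<inter> {x. u \<bullet> x = supp_val poly u} facet_of poly"
      using facet_of_poly supp_val_poly by simp
    then show "u \<in> facet_normals poly"
      unfolding facet_normals_def using unit[OF \<open>u \<in> X\<close>] by blast
  qed
  show "facet_normals poly \<subseteq> X"
  proof
    fix u assume "u \<in> facet_normals poly"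
    then obtain F where "norm u = 1" "F facet_of poly" and Fu: "F = poly \<inter> {x. u \<bullet> x = supp_val poly u}"
      unfolding facet_normals_def by blast
    obtain v where "v \<in> X" and Fv: "F = poly \<inter> {x. v \<bullet> x = h v}"
      using facet_of_poly_cases[OF \<open>F facet_of poly\<close>] by blast
    have "\<forall>x\<in>poly. u \<bullet> x \<le> supp_val poly u"
      using inner_le_supp_val polytope_imp_bounded[OF polytope_poly] by blast
    moreover have "\<forall>x\<in>poly. v \<bullet> x \<le> h v" using \<open>v \<in> X\<close> by blast
    ultimately have "u = v"
      using facet_unit_normal_unique[OF aff_dim_poly \<open>F facet_of poly\<close> \<open>norm u = 1\<close>
          unit[OF \<open>v \<in> X\<close>] Fu Fv] by blast
    then show "u \<in> X" using \<open>v \<in> X\<close> by simp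
  qed
qed

end

section \<open>Circuits of the facet normals and strong monotypy\<close>

lemma linear_inner_representation:
  fixes g :: "'a::euclidean_space \<Rightarrow> real"
  assumes "linear g"
  obtains x where "\<And>y. g y = y \<bullet> x"
proof
  fix y :: 'a
  have "g y = g (\<Sum>i\<in>Basis. (y \<bullet> i) *\<^sub>R i)" by (simp add: euclidean_representation)
  also have "\<dots> = (\<Sum>i\<in>Basis. (y \<bullet> i) * g i)" using assms by (simp add: linear_sum linear_scale)
  also have "\<dots> = y \<bullet> (\<Sum>i\<in>Basis. g i *\<^sub>R i)" by (simp add: inner_sum_right mult.commute)
  finally show "g y = y \<bullet> (\<Sum>i\<in>Basis. g i *\<^sub>R i)" .
qed

lemma circuit_support_delete_independent:
  assumes "finite X" and c: "circuit {0} X c" and "u0 \<in> X" "c u0 \<noteq> 0"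
  shows "independent ({u\<in>X. c u \<noteq> 0} - {u0})"
proof
  assume "dependent ({u\<in>X. c u \<noteq> 0} - {u0})"
  then obtain T a where T: "finite T" "T \<subseteq> {u\<in>X. c u \<noteq> 0} - {u0}" "(\<Sum>v\<in>T. a v *\<^sub>R v) = 0"
    and "\<exists>v\<in>T. a v \<noteq> 0"
    unfolding dependent_explicit by blast
  define e where "e u = (if u \<in> T then a u else 0)" for u
  have "(\<Sum>u\<in>X. e u *\<^sub>R u) = (\<Sum>u\<in>T. e u *\<^sub>R u)"
    by (rule sum.mono_neutral_right) (use \<open>finite X\<close> T(2) in \<open>auto simp: e_def\<close>)
  also have "\<dots> = 0" using T(3) by (simp add: e_def)
  finally have "(\<Sum>u\<in>X. e u *\<^sub>R u) \<in> {0}" by simp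
  moreover have "\<forall>u\<in>X. c u = 0 \<longrightarrow> e u = 0" using T(2) by (auto simp: e_def)
  ultimately obtain s where s: "\<forall>u\<in>X. e u = s * c u" using c unfolding circuit_def by blast
  have "e u0 = 0" using T(2) by (auto simp: e_def)
  then have "s = 0" using s \<open>u0 \<in> X\<close> \<open>c u0 \<noteq> 0\<close> by simp
  have "a v = 0" if "v \<in> T" for v
  proof -
    have "v \<in> X" using T(2) that by blast
    then have "e v = 0" using s \<open>s = 0\<close> by simp
    then show ?thesis using that by (simp add: e_def)
  qed
  then show False using \<open>\<exists>v\<in>T. a v \<noteq> 0\<close> by blast
qed

lemma circuit_hyperplanes_meet_iff:
  fixes X :: "'a::euclidean_space set"
  assumes "finite X" and c: "circuit {0} X c"
  shows "(\<exists>x. \<forall>u\<in>X. c u \<noteq> 0 \<longrightarrow> u \<bullet> x = t u) \<longleftrightarrow> (\<Sum>u\<in>X. c u * t u) = 0"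
proof -
  have dep: "(\<Sum>u\<in>X. c u * (u \<bullet> x)) = 0" for x
  proof -
    have "(\<Sum>u\<in>X. c u * (u \<bullet> x)) = (\<Sum>u\<in>X. c u *\<^sub>R u) \<bullet> x" by (simp add: inner_sum_left)
    then show ?thesis using c unfolding circuit_def by simp
  qed
  show ?thesis
  proof
    assume "\<exists>x. \<forall>u\<in>X. c u \<noteq> 0 \<longrightarrow> u \<bullet> x = t u"
    then obtain x where x: "\<forall>u\<in>X. c u \<noteq> 0 \<longrightarrow> u \<bullet> x = t u" by blast
    have "(\<Sum>u\<in>X. c u * t u) = (\<Sum>u\<in>X. c u * (u \<bullet> x))" by (rule sum.cong) (use x in auto)
    then show "(\<Sum>u\<in>X. c u * t u) = 0" using dep by simp
  next
    assume t: "(\<Sum>u\<in>X. c u * t u) = 0"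
    obtain u0 where "u0 \<in> X" "c u0 \<noteq> 0" using c unfolding circuit_def by blast
    define B where "B = {u\<in>X. c u \<noteq> 0} - {u0}"
    obtain g where "linear g" and g: "\<forall>u\<in>B. g u = t u"
      using linear_independent_extend[OF circuit_support_delete_independent[OF assms \<open>u0 \<in> X\<close> \<open>c u0 \<noteq> 0\<close>]]
      unfolding B_def by blast
    obtain x where x: "\<And>y. g y = y \<bullet> x" using linear_inner_representation[OF \<open>linear g\<close>] by blast
    have on_B: "u \<bullet> x = t u" if "u \<in> X" "c u \<noteq> 0" "u \<noteq> u0" for u
      using that g x by (auto simp: B_def)
    \<comment> \<open>the remaining equation at u0 is forced by the linear dependence\<close>
    have "(\<Sum>u\<in>X-{u0}. c u * (u \<bullet> x)) = (\<Sum>u\<in>X-{u0}. c u * t u)"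
      by (rule sum.cong) (use on_B in auto)
    moreover have "c u0 * (u0 \<bullet> x) + (\<Sum>u\<in>X-{u0}. c u * (u \<bullet> x)) = 0"
      using dep[of x] sum.remove[OF \<open>finite X\<close> \<open>u0 \<in> X\<close>, of "\<lambda>u. c u * (u \<bullet> x)"] by simp
    moreover have "c u0 * t u0 + (\<Sum>u\<in>X-{u0}. c u * t u) = 0"
      using t sum.remove[OF \<open>finite X\<close> \<open>u0 \<in> X\<close>, of "\<lambda>u. c u * t u"] by simp
    ultimately have "c u0 * (u0 \<bullet> x) = c u0 * t u0" by linarith
    then have "u0 \<bullet> x = t u0" using \<open>c u0 \<noteq> 0\<close> by simp
    then show "\<exists>x. \<forall>u\<in>X. c u \<noteq> 0 \<longrightarrow> u \<bullet> x = t u" using on_B by metis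
  qed
qed

lemma circuit_abs_inner_witness:
  fixes X :: "'a::euclidean_space set"
  assumes "finite X" and c: "circuit {0} X c" and ab: "a \<in> X" "b \<in> X" "a \<noteq> b" and "c a * c b > 0"
  obtains w where "(\<Sum>u\<in>X. c u * \<bar>u \<bullet> w\<bar>) = 2 * c a"
proof -
  have "c a \<noteq> 0" "c b \<noteq> 0" and ratio: "c a / c b > 0"
    using \<open>c a * c b > 0\<close> by (auto simp: zero_less_mult_iff zero_less_divide_iff)
  define t where "t u = (if u = a then 1 else if u = b then - c a / c b else 0)" for u
  have "(\<Sum>u\<in>X. c u * t u) = (\<Sum>u\<in>X. (if u = a then c a else 0) + (if u = b then - c a else 0))"
    by (rule sum.cong) (use ab(3) \<open>c b \<noteq> 0\<close> in \<open>auto simp: t_def\<close>)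
  also have "\<dots> = 0" using \<open>finite X\<close> ab by (simp add: sum.distrib sum.delta')
  finally obtain w where w: "\<forall>u\<in>X. c u \<noteq> 0 \<longrightarrow> u \<bullet> w = t u"
    using circuit_hyperplanes_meet_iff[OF \<open>finite X\<close> c] by blast
  have "c u * \<bar>u \<bullet> w\<bar> = (if u = a then c a else 0) + (if u = b then c a else 0)" if "u \<in> X" for u
  proof (cases "c u = 0")
    case True
    then show ?thesis using \<open>c a \<noteq> 0\<close> \<open>c b \<noteq> 0\<close> by auto
  next
    case False
    have "\<bar>c a / c b\<bar> = c a / c b" using ratio by (rule abs_of_pos)
    then have "c b * \<bar>c a / c b\<bar> = c a" using \<open>c b \<noteq> 0\<close> by simp
    moreover have "u \<bullet> w = t u" using False w that by blast
    ultimately show ?thesis using ab(3) by (auto simp: t_def)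
  qed
  then have "(\<Sum>u\<in>X. c u * \<bar>u \<bullet> w\<bar>) = (\<Sum>u\<in>X. (if u = a then c a else 0) + (if u = b then c a else 0))"
    by (rule sum.cong[OF refl])
  also have "\<dots> = 2 * c a" using \<open>finite X\<close> ab by (simp add: sum.distrib sum.delta')
  finally show thesis using that by blast
qed

lemma arr_comb_equiv_hyperplanes_meet:
  assumes "arr_comb_equiv P Q" "facet_normals P = N" "facet_normals Q = N"
    and "\<exists>x. \<forall>u\<in>N. c u \<noteq> 0 \<longrightarrow> u \<bullet> x = supp_val P u"
  shows "\<exists>y. \<forall>u\<in>N. c u \<noteq> 0 \<longrightarrow> u \<bullet> y = supp_val Q u"
proof -
  obtain x where x: "\<forall>u\<in>N. c u \<noteq> 0 \<longrightarrow> u \<bullet> x = supp_val P u" using assms(4) by blast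
  define \<sigma> where "\<sigma> u = sgn (u \<bullet> x - supp_val P u)" for u
  have "x \<in> arr_cell P \<sigma>" unfolding arr_cell_def \<sigma>_def by simp
  then obtain y where y: "\<forall>u\<in>N. sgn (u \<bullet> y - supp_val Q u) = \<sigma> u"
    using assms(1-3) unfolding arr_comb_equiv_def arr_cell_def by blast
  have "u \<bullet> y = supp_val Q u" if "u \<in> N" "c u \<noteq> 0" for u
  proof -
    have "sgn (u \<bullet> y - supp_val Q u) = \<sigma> u" using y that(1) by blast
    also have "\<dots> = 0" using x that by (simp add: \<sigma>_def)
    finally show ?thesis by (simp add: sgn_eq_0_iff)
  qed
  then show ?thesis by blast
qed

lemma unit_inner_less_one:
  fixes u v :: "'a::real_inner"
  assumes "norm u = 1" "norm v = 1" "u \<noteq> v"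
  shows "v \<bullet> u < 1"
proof -
  have "0 < (v - u) \<bullet> (v - u)" using assms(3) by simp
  also have "(v - u) \<bullet> (v - u) = 2 - 2 * (v \<bullet> u)"
    using assms(1,2) by (simp add: inner_diff_left inner_diff_right inner_commute norm_eq_1)
  finally show ?thesis by simp
qed

lemma tilted_polytope:
  fixes X :: "'a::euclidean_space set" and w :: 'a
  assumes "finite X" "\<And>u. u \<in> X \<Longrightarrow> norm u = 1" "positively_spanning X" "\<tau> \<ge> 0"
  defines "Q \<equiv> {x. \<forall>u\<in>X. u \<bullet> x \<le> 1 + \<tau> * \<bar>u \<bullet> w\<bar>}"
  shows "polytope Q" "facet_normals Q = X" "\<And>u. u \<in> X \<Longrightarrow> supp_val Q u = 1 + \<tau> * \<bar>u \<bullet> w\<bar>"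
proof -
  \<comment> \<open>the witness for u is tight for u and, since distinct unit vectors have inner product
    less than 1, strict for every other normal\<close>
  interpret tight_halfspaces X "\<lambda>u. 1 + \<tau> * \<bar>u \<bullet> w\<bar>" "\<lambda>u. u + (\<tau> * sgn (u \<bullet> w)) *\<^sub>R w"
  proof
    fix u assume "u \<in> X"
    then show "u \<bullet> (u + (\<tau> * sgn (u \<bullet> w)) *\<^sub>R w) = 1 + \<tau> * \<bar>u \<bullet> w\<bar>"
      using assms(2) by (simp add: inner_add_right norm_eq_1 sgn_mult_abs mult.assoc abs_sgn)
    fix v assume "v \<in> X" "v \<noteq> u"
    have "sgn (u \<bullet> w) * (v \<bullet> w) \<le> \<bar>v \<bullet> w\<bar>"
      by (cases "u \<bullet> w" rule: linorder_cases) (auto simp: sgn_if)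
    then have "\<tau> * (sgn (u \<bullet> w) * (v \<bullet> w)) \<le> \<tau> * \<bar>v \<bullet> w\<bar>" using assms(4) by (rule mult_left_mono)
    moreover have "v \<bullet> u < 1" using unit_inner_less_one assms(2) \<open>u \<in> X\<close> \<open>v \<in> X\<close> \<open>v \<noteq> u\<close> by metis
    ultimately show "v \<bullet> (u + (\<tau> * sgn (u \<bullet> w)) *\<^sub>R w) < 1 + \<tau> * \<bar>v \<bullet> w\<bar>"
      by (simp add: inner_add_right)
  qed (use assms(1-3) in auto)
  show "polytope Q" unfolding Q_def by (rule polytope_poly)
  show "facet_normals Q = X" unfolding Q_def by (rule facet_normals_poly)
  show "supp_val Q u = 1 + \<tau> * \<bar>u \<bullet> w\<bar>" if "u \<in> X" for u
    unfolding Q_def using that by (rule supp_val_poly)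
qed

lemma facet_normals_norm: "u \<in> facet_normals P \<Longrightarrow> norm u = 1"
  unfolding facet_normals_def by blast

lemma facet_normals_positively_spanning:
  fixes P :: "'a::euclidean_space set"
  assumes "polytope P" "aff_dim P = int DIM('a)"
  shows "positively_spanning (facet_normals P)"
proof -
  have "P \<noteq> {}" using assms(2) by auto
  then obtain p where "p \<in> P" by blast
  then show ?thesis
    using bounded_halfspaces_positively_spanning polytope_facet_normals[OF assms]
      polytope_imp_bounded[OF assms(1)] by blast
qed

lemma strongly_monotypic_circuit_support_sum:
  fixes P :: "'a::euclidean_space set"
  assumes "polytope P" "aff_dim P = int DIM('a)" "strongly_monotypic P"
    and c: "circuit {0} (facet_normals P) c" and "\<tau> \<ge> 0"
  shows "(\<Sum>u\<in>facet_normals P. c u * supp_val P u) = 0 \<longleftrightarrow>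
    (\<Sum>u\<in>facet_normals P. c u) + \<tau> * (\<Sum>u\<in>facet_normals P. c u * \<bar>u \<bullet> w\<bar>) = 0"
proof -
  define N where "N = facet_normals P"
  define Q where "Q = {x. \<forall>u\<in>N. u \<bullet> x \<le> 1 + \<tau> * \<bar>u \<bullet> w\<bar>}"
  have "finite N" using polytope_facet_normals[OF assms(1,2)] by (simp add: N_def)
  note tilted = tilted_polytope[where w = w, OF \<open>finite N\<close> facet_normals_norm[of _ P, folded N_def]
      facet_normals_positively_spanning[OF assms(1,2), folded N_def] \<open>\<tau> \<ge> 0\<close>, folded Q_def]
  have equiv: "arr_comb_equiv P Q"
    using assms(3) tilted(1,2) unfolding strongly_monotypic_def N_def by blast
  then have equiv': "arr_comb_equiv Q P" unfolding arr_comb_equiv_def by blast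
  have "(\<Sum>u\<in>N. c u * supp_val Q u) = (\<Sum>u\<in>N. c u * (1 + \<tau> * \<bar>u \<bullet> w\<bar>))"
    using tilted(3) by simp
  also have "\<dots> = (\<Sum>u\<in>N. c u) + \<tau> * (\<Sum>u\<in>N. c u * \<bar>u \<bullet> w\<bar>)"
    by (simp add: algebra_simps sum.distrib sum_distrib_left)
  finally have supp_Q: "(\<Sum>u\<in>N. c u * supp_val Q u) = (\<Sum>u\<in>N. c u) + \<tau> * (\<Sum>u\<in>N. c u * \<bar>u \<bullet> w\<bar>)" .
  note meet = circuit_hyperplanes_meet_iff[OF \<open>finite N\<close> c[folded N_def]]
  have "(\<Sum>u\<in>N. c u * supp_val P u) = 0 \<longleftrightarrow> (\<exists>x. \<forall>u\<in>N. c u \<noteq> 0 \<longrightarrow> u \<bullet> x = supp_val P u)"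
    using meet by blast
  also have "\<dots> \<longleftrightarrow> (\<exists>x. \<forall>u\<in>N. c u \<noteq> 0 \<longrightarrow> u \<bullet> x = supp_val Q u)"
    using arr_comb_equiv_hyperplanes_meet[OF equiv N_def[symmetric] tilted(2)]
      arr_comb_equiv_hyperplanes_meet[OF equiv' tilted(2) N_def[symmetric]] by blast
  also have "\<dots> \<longleftrightarrow> (\<Sum>u\<in>N. c u * supp_val Q u) = 0" using meet by blast
  finally show ?thesis using supp_Q by (simp add: N_def)
qed

lemma two_elements_of_card_gt_1:
  assumes "finite A" "\<not> card A \<le> 1"
  obtains x y where "x \<in> A" "y \<in> A" "x \<noteq> y"
  using assms by (auto simp: card_le_Suc0_iff_eq)

lemma circuit_tilting_directions:
  fixes X :: "'a::euclidean_space set"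
  assumes "finite X" and c: "circuit {0} X c"
    and "\<not> (card {u\<in>X. c u > 0} \<le> 1 \<or> card {u\<in>X. c u < 0} \<le> 1)"
  obtains w1 w2 where "(\<Sum>u\<in>X. c u * \<bar>u \<bullet> w1\<bar>) > 0" "(\<Sum>u\<in>X. c u * \<bar>u \<bullet> w2\<bar>) < 0"
proof -
  have pos: "\<not> card {u\<in>X. c u > 0} \<le> 1" and neg: "\<not> card {u\<in>X. c u < 0} \<le> 1"
    using assms(3) by auto
  have "finite {u\<in>X. c u > 0}" "finite {u\<in>X. c u < 0}" using \<open>finite X\<close> by simp_all
  obtain a1 a2 where "a1 \<in> {u\<in>X. c u > 0}" "a2 \<in> {u\<in>X. c u > 0}" "a1 \<noteq> a2"
    by (rule two_elements_of_card_gt_1[OF \<open>finite {u\<in>X. c u > 0}\<close> pos])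
  moreover obtain b1 b2 where "b1 \<in> {u\<in>X. c u < 0}" "b2 \<in> {u\<in>X. c u < 0}" "b1 \<noteq> b2"
    by (rule two_elements_of_card_gt_1[OF \<open>finite {u\<in>X. c u < 0}\<close> neg])
  ultimately have a: "a1 \<in> X" "a2 \<in> X" "a1 \<noteq> a2" "c a1 * c a2 > 0"
    and b: "b1 \<in> X" "b2 \<in> X" "b1 \<noteq> b2" "c b1 * c b2 > 0" and "c a1 > 0" "c b1 < 0"
    by (auto simp: mult_neg_neg)
  obtain w1 where "(\<Sum>u\<in>X. c u * \<bar>u \<bullet> w1\<bar>) = 2 * c a1"
    by (rule circuit_abs_inner_witness[OF \<open>finite X\<close> c a])
  moreover obtain w2 where "(\<Sum>u\<in>X. c u * \<bar>u \<bullet> w2\<bar>) = 2 * c b1"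
    by (rule circuit_abs_inner_witness[OF \<open>finite X\<close> c b])
  ultimately show thesis using that[of w1 w2] \<open>c a1 > 0\<close> \<open>c b1 < 0\<close> by simp
qed

theorem strongly_monotypic_circuits_almost_positive:
  fixes P :: "'a::euclidean_space set"
  assumes "polytope P" "aff_dim P = int DIM('a)" "strongly_monotypic P"
  shows "circuits_almost_positive {0} (facet_normals P)"
  unfolding circuits_almost_positive_def
proof (intro allI impI)
  define N where "N = facet_normals P"
  fix c assume c: "circuit {0} N c"
  have "finite N" using polytope_facet_normals[OF assms(1,2)] by (simp add: N_def)
  note support_sum = strongly_monotypic_circuit_support_sum[OF assms c[unfolded N_def], folded N_def]
  define A where "A = (\<Sum>u\<in>N. c u)"
  define S where "S w = (\<Sum>u\<in>N. c u * \<bar>u \<bullet> w\<bar>)" for w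
  show "card {u\<in>N. c u > 0} \<le> 1 \<or> card {u\<in>N. c u < 0} \<le> 1"
  proof (rule ccontr)
    assume "\<not> ?thesis"
    then obtain w1 w2 where "S w1 > 0" "S w2 < 0"
      using circuit_tilting_directions[OF \<open>finite N\<close> c] unfolding S_def by blast
    \<comment> \<open>tilting along w1 or w2 moves A + tau S(w) through zero from either side\<close>
    show False
    proof (cases "(\<Sum>u\<in>N. c u * supp_val P u) = 0")
      case True
      then have "A = 0" "A + S w1 = 0"
        using support_sum[of 0] support_sum[of 1 w1] by (simp_all add: A_def S_def)
      then show False using \<open>S w1 > 0\<close> by simp
    next
      case False
      show False
      proof (cases "A \<ge> 0")
        case True
        then have "A / (- S w2) \<ge> 0" using \<open>S w2 < 0\<close> by (intro divide_nonneg_pos) auto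
        moreover have "A + A / (- S w2) * S w2 = 0" using \<open>S w2 < 0\<close> by simp
        ultimately show False
          using support_sum[of "A / (- S w2)" w2] False by (simp add: A_def S_def)
      next
        case False
        then have "- A / S w1 \<ge> 0" using \<open>S w1 > 0\<close> by (intro divide_nonneg_pos) auto
        moreover have "A + - A / S w1 * S w1 = 0" using \<open>S w1 > 0\<close> by simp
        ultimately show False
          using support_sum[of "- A / S w1" w1] \<open>(\<Sum>u\<in>N. c u * supp_val P u) \<noteq> 0\<close>
          by (simp add: A_def S_def)
      qed
    qed
  qed
qed

section \<open>Decomposition of the facet normals\<close>

lemma positively_spanning_totally_cyclic:
  assumes "finite X" "positively_spanning X"
  shows "totally_cyclic {0} X"
  unfolding totally_cyclic_def
proof
  fix u assume "u \<in> X"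
  obtain c where c: "\<forall>w\<in>X. c w \<ge> 0" "- u = (\<Sum>w\<in>X. c w *\<^sub>R w)"
    using assms(2) unfolding positively_spanning_def by blast
  define c' where "c' w = c w + (if w = u then 1 else 0)" for w
  have "(\<Sum>w\<in>X. c' w *\<^sub>R w) = (\<Sum>w\<in>X. c w *\<^sub>R w) + (\<Sum>w\<in>X. (if w = u then 1 else 0) *\<^sub>R w)"
    by (simp add: c'_def scaleR_add_left sum.distrib)
  also have "(\<Sum>w\<in>X. (if w = u then 1 else 0) *\<^sub>R w) = u"
    using assms(1) \<open>u \<in> X\<close> by (simp add: if_distrib[of "\<lambda>c. c *\<^sub>R _"] sum.delta' cong: if_cong)
  finally have "(\<Sum>w\<in>X. c' w *\<^sub>R w) = 0" by (simp add: c(2)[symmetric])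
  moreover have "\<forall>w\<in>X. c' w \<ge> 0" "c' u > 0" using c(1) \<open>u \<in> X\<close> by (auto simp: c'_def)
  ultimately show "\<exists>c. (\<forall>j\<in>X. 0 \<le> c j) \<and> 0 < c u \<and> (\<Sum>j\<in>X. c j *\<^sub>R j) \<in> {0}" by auto
qed

lemma positively_spanning_span_UNIV:
  assumes "positively_spanning X"
  shows "span X = UNIV"
proof -
  have "v \<in> span X" for v
  proof -
    obtain c where "v = (\<Sum>u\<in>X. c u *\<^sub>R u)" using assms unfolding positively_spanning_def by blast
    then show ?thesis by (simp add: span_sum span_scale span_base)
  qed
  then show ?thesis by blast
qed

lemma span_UN_sum:
  assumes "finite A" "x \<in> span (\<Union>j\<in>A. Z j)"
  shows "\<exists>v. (\<forall>j\<in>A. v j \<in> span (Z j)) \<and> x = (\<Sum>j\<in>A. v j)"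
  using assms
proof (induction A arbitrary: x rule: finite_induct)
  case empty
  then show ?case by simp
next
  case (insert a A)
  then obtain y z where "y \<in> span (Z a)" "z \<in> span (\<Union>j\<in>A. Z j)" "x = y + z"
    by (auto simp: span_Un)
  moreover obtain v where "\<forall>j\<in>A. v j \<in> span (Z j)" "z = (\<Sum>j\<in>A. v j)"
    using insert.IH \<open>z \<in> span (\<Union>j\<in>A. Z j)\<close> by blast
  moreover have "(\<Sum>j\<in>A. (v(a := y)) j) = (\<Sum>j\<in>A. v j)"
    using insert.hyps(2) by (intro sum.cong) auto
  ultimately show ?case
    using insert.hyps by (intro exI[of _ "v(a := y)"]) auto
qed

lemma circuit_decomposition_direct_sum:
  assumes dec: "circuit_decomposition {0} I k Z" and "i < k"
  shows "span (Z i) \<inter> span (\<Union>j\<in>{..<k} - {i}. Z j) = {0}"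
proof -
  have indep: "\<forall>v. (\<forall>j<k. v j \<in> span (Z j)) \<and> (\<Sum>j<k. v j) = 0 \<longrightarrow> (\<forall>j<k. v j = 0)"
    using dec unfolding circuit_decomposition_def by simp
  have "w = 0" if w: "w \<in> span (Z i)" "w \<in> span (\<Union>j\<in>{..<k} - {i}. Z j)" for w
  proof -
    obtain v where v: "\<forall>j\<in>{..<k} - {i}. v j \<in> span (Z j)" "w = (\<Sum>j\<in>{..<k} - {i}. v j)"
      using span_UN_sum[OF _ w(2)] by blast
    define v' where "v' = v(i := - w)"
    have "\<forall>j<k. v' j \<in> span (Z j)" using v(1) w(1) by (auto simp: v'_def span_neg)
    moreover have "(\<Sum>j<k. v' j) = 0"
    proof -
      have "(\<Sum>j<k. v' j) = v' i + (\<Sum>j\<in>{..<k} - {i}. v' j)"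
        using sum.remove[of "{..<k}" i v'] \<open>i < k\<close> by simp
      also have "(\<Sum>j\<in>{..<k} - {i}. v' j) = w" unfolding v(2) v'_def by (intro sum.cong) auto
      finally show ?thesis by (simp add: v'_def)
    qed
    ultimately have "v' i = 0" using indep \<open>i < k\<close> by blast
    then show "w = 0" by (simp add: v'_def)
  qed
  then show ?thesis using span_zero by blast
qed

lemma positive_circuit_zero_simplex:
  fixes Z :: "'a::euclidean_space set"
  assumes "positive_circuit {0} Z"
  shows "finite Z" "\<not> affine_dependent Z" "0 \<in> rel_interior (convex hull Z)"
proof -
  obtain \<mu> where "finite Z" "Z \<noteq> {}" and \<mu>: "\<forall>z\<in>Z. \<mu> z > 0" "(\<Sum>z\<in>Z. \<mu> z *\<^sub>R z) = 0"
    and unique: "\<forall>e. (\<Sum>z\<in>Z. e z *\<^sub>R z) = 0 \<longrightarrow> (\<exists>s. \<forall>z\<in>Z. e z = s * \<mu> z)"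
    using assms unfolding positive_circuit_def by auto
  show "finite Z" by fact
  have "sum \<mu> Z > 0" using \<open>finite Z\<close> \<open>Z \<noteq> {}\<close> \<mu>(1) by (intro sum_pos) auto
  show "\<not> affine_dependent Z"
  proof
    assume "affine_dependent Z"
    then obtain S U where S: "finite S" "S \<subseteq> Z" "sum U S = 0" "\<exists>v\<in>S. U v \<noteq> 0" "(\<Sum>v\<in>S. U v *\<^sub>R v) = 0"
      unfolding affine_dependent_explicit by blast
    define e where "e z = (if z \<in> S then U z else 0)" for z
    have "(\<Sum>z\<in>Z. e z *\<^sub>R z) = (\<Sum>z\<in>S. U z *\<^sub>R z)" "sum e Z = sum U S"
      unfolding e_def using \<open>finite Z\<close> S(2) by (simp_all add: if_distrib[of "\<lambda>c. c *\<^sub>R _"]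
          sum.inter_restrict[symmetric] Int_absorb1 cong: if_cong)
    then have "(\<Sum>z\<in>Z. e z *\<^sub>R z) = 0" and "sum e Z = 0" using S(3,5) by simp_all
    then obtain s where s: "\<forall>z\<in>Z. e z = s * \<mu> z" using unique by blast
    \<comment> \<open>an affine dependence has coefficient sum zero, which the positive \<mu> cannot have\<close>
    then have "s * sum \<mu> Z = 0" using \<open>sum e Z = 0\<close> by (simp add: sum_distrib_left)
    then have "s = 0" using \<open>sum \<mu> Z > 0\<close> by simp
    then have "U v = 0" if "v \<in> S" for v using s S(2) that by (force simp: e_def)
    then show False using S(4) by blast
  qed
  define a where "a z = \<mu> z / sum \<mu> Z" for z
  have "\<forall>z\<in>Z. a z > 0" "sum a Z = 1"
    using \<mu>(1) \<open>sum \<mu> Z > 0\<close> by (simp_all add: a_def sum_divide_distrib[symmetric])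
  moreover have "(\<Sum>z\<in>Z. a z *\<^sub>R z) = (1 / sum \<mu> Z) *\<^sub>R (\<Sum>z\<in>Z. \<mu> z *\<^sub>R z)"
    unfolding scaleR_sum_right by (rule sum.cong) (auto simp: a_def)
  then have "(\<Sum>z\<in>Z. a z *\<^sub>R z) = 0" using \<mu>(2) by simp
  ultimately show "0 \<in> rel_interior (convex hull Z)"
    unfolding rel_interior_convex_hull_explicit[OF \<open>\<not> affine_dependent Z\<close>] by blast
qed

lemma strongly_monotypic_circuit_decomposition:
  fixes P :: "'a::euclidean_space set"
  assumes "polytope P" "aff_dim P = int DIM('a)" "strongly_monotypic P"
  obtains k Z where "circuit_decomposition {0} (facet_normals P) k Z"
proof -
  have "finite (facet_normals P)" using polytope_facet_normals[OF assms(1,2)] by blast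
  moreover have "facet_normals P \<inter> {0} = {}" using facet_normals_norm by fastforce
  ultimately show thesis
    using circuit_decomposition_exists[OF _ subspace_single_0 _ positively_spanning_totally_cyclic
        strongly_monotypic_circuits_almost_positive[OF assms]]
      facet_normals_positively_spanning[OF assms(1,2)] that by blast
qed

lemma circuit_decomposition_span_UNIV:
  fixes Z :: "nat \<Rightarrow> 'a::euclidean_space set"
  assumes "circuit_decomposition {0} I k Z" "span I = UNIV"
  shows "span (\<Union>i<k. Z i) = UNIV" "k \<ge> 1"
proof -
  show span_Z: "span (\<Union>i<k. Z i) = UNIV"
    using assms unfolding circuit_decomposition_def by auto
  show "k \<ge> 1"
  proof (rule ccontr)
    assume "\<not> k \<ge> 1"
    then have "k = 0" by simp
    then have "(UNIV :: 'a set) = {0}" using span_Z by simp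
    moreover obtain b :: 'a where "b \<in> Basis" using nonempty_Basis by blast
    ultimately show False using nonzero_Basis by blast
  qed
qed

theorem theorem3:
  fixes P :: "'a::euclidean_space set"
  assumes "polytope P" and "aff_dim P = int DIM('a)" and "strongly_monotypic P"
  shows "\<exists>k::nat. \<exists>X :: nat \<Rightarrow> 'a set. k \<ge> 1 \<and>
           (\<forall>i<k. X i \<subseteq> facet_normals P) \<and>
           (\<forall>i<k. \<forall>j<k. i \<noteq> j \<longrightarrow> X i \<inter> X j = {}) \<and>
           (\<forall>i<k. finite (X i) \<and> \<not> affine_dependent (X i) \<and>
                  0 \<in> rel_interior (convex hull (X i))) \<and>
           (\<forall>i<k. span (X i) \<inter> span (\<Union>j\<in>{..<k} - {i}. X j) = {0}) \<and>
           span (\<Union>i<k. X i) = UNIV"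
proof -
  let ?N = "facet_normals P"
  obtain k Z where dec: "circuit_decomposition {0} ?N k Z"
    using strongly_monotypic_circuit_decomposition[OF assms] by blast
  note span_Z = circuit_decomposition_span_UNIV[OF dec
      positively_spanning_span_UNIV[OF facet_normals_positively_spanning[OF assms(1,2)]]]
  have Z: "\<forall>i<k. Z i \<subseteq> ?N \<and> positive_circuit {0} (Z i)" and "disjoint_family_on Z {..<k}"
    using dec unfolding circuit_decomposition_def by auto
  show ?thesis
  proof (intro exI[of _ k] exI[of _ Z] conjI allI impI)
    show "k \<ge> 1" "span (\<Union>i<k. Z i) = UNIV" using span_Z by blast+
    fix i assume "i < k"
    then show "Z i \<subseteq> ?N" using Z by blast
    show "finite (Z i)" "\<not> affine_dependent (Z i)" "0 \<in> rel_interior (convex hull (Z i))"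
      using positive_circuit_zero_simplex Z \<open>i < k\<close> by blast+
    show "span (Z i) \<inter> span (\<Union>j\<in>{..<k} - {i}. Z j) = {0}"
      by (rule circuit_decomposition_direct_sum[OF dec \<open>i < k\<close>])
    fix j assume "j < k" "i \<noteq> j"
    then show "Z i \<inter> Z j = {}"
      using \<open>disjoint_family_on Z {..<k}\<close> \<open>i < k\<close> unfolding disjoint_family_on_def by blast
  qed
qed

end
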